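(* Let $\bar x\in M$ be a nondegenerate T-stationary point of MPOC. Then $\bar x$ is a local minimizer of MPOC if and only if its T-index vanishes, i.e. if and only if $a_{00}(\bar x)=\emptyset$ and $D^2L(\bar x)|_{T_{\bar x}M(\bar x)}$ has no negative eigenvalues.
   Context: MPOC: minimize $f(x)$ subject to $x\in M=\{x\in\mathbb{R}^n \mid h_i(x)=0,\ i\in I;\ g_j(x)\ge 0,\ j\in J;\ F_{1,m}(x)F_{2,m}(x)=0,\ F_{2,m}(x)\ge 0,\ m=1,\dots,k\}$, all functions $C^2$, $I,J$ finite. Index sets at $\bar x\in M$: $J_0(\bar x)=\{j\mid g_j(\bar x)=0\}$, $a_{00}(\bar x)=\{m\mid F_{1,m}(\bar x)=0=F_{2,m}(\bar x)\}$, $a_{01}(\bar x)=\{m\mid F_{1,m}(\bar x)=0,F_{2,m}(\bar x)>0\}$, $a_{10}(\bar x)=\{m\mid F_{1,m}(\bar x)\ne0,F_{2,m}(\bar x)=0\}$. LICQ at $\bar x$: $Dh_i(\bar x)$ ($i\in I$), $Dg_j(\bar x)$ ($j\in J_0(\bar x)$), $DF_{1,m}(\bar x)$ ($m\in a_{01}\cup a_{00}$), $DF_{2,m}(\bar x)$ ($m\in a_{10}\cup a_{00}$) linearly independent. T-stationary point: $\bar x\in M$ with multipliers $\bar\lambda_i,\bar\mu_j$ ($j\in J_0(\bar x)$), $\bar\sigma_{1,m}$ ($m\in a_{01}$), $\bar\sigma_{2,m}$ ($m\in a_{10}$), $\bar\varrho_{1,m},\bar\varrho_{2,m}$ ($m\in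 a_{00}$) such that $Df(\bar x)=\sum_{I}\bar\lambda_iDh_i+\sum_{J_0}\bar\mu_jDg_j+\sum_{a_{01}}\bar\sigma_{1,m}DF_{1,m}+\sum_{a_{10}}\bar\sigma_{2,m}DF_{2,m}+\sum_{a_{00}}(\bar\varrho_{1,m}DF_{1,m}+\bar\varrho_{2,m}DF_{2,m})$ (at $\bar x$), $\bar\mu_j\ge0$, and $\bar\varrho_{1,m}=0$ or $\bar\varrho_{2,m}\le0$ for each $m\in a_{00}(\bar x)$. Lagrange function $L(x)=f(x)-\sum_{I}\bar\lambda_ih_i(x)-\sum_{J_0(\bar x)}\bar\mu_jg_j(x)-\sum_{a_{01}}\bar\sigma_{1,m}F_{1,m}(x)-\sum_{a_{10}}\bar\sigma_{2,m}F_{2,m}(x)-\sum_{a_{00}}(\bar\varrho_{1,m}F_{1,m}(x)+\bar\varrho_{2,m}F_{2,m}(x))$; $T_{\bar x}M(\bar x)=\{\xi\mid Dh_i(\bar x)\xi=0,\ Dg_j(\bar x)\xi=0\ (j\in J_0),\ DF_{1,m}(\bar x)\xi=0\ (m\in a_{01}\cup a_{00}),\ DF_{2,m}(\bar x)\xi=0\ (m\in a_{10}\cup a_{00})\}$. Nondegenerate: ND1 LICQ at $\bar x$; ND2 $\bar\mu_j>0$ for all $j\in J_0(\bar x)$; ND3 $\bar\varrho_{1,m}\ne0$ and $\bar\varrho_{2,m}<0$ for all $m\in a_{00}(\bar x)$; ND4 $D^2L(\bar x)|_{T_{\bar x}M(\bar x)}$ nonsingular. T-index: $TI=QI+BI$,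 where $QI$ is the number of negative eigenvalues of $D^2L(\bar x)|_{T_{\bar x}M(\bar x)}$ and $BI$ is the number of negative $\bar\varrho_{2,m}$, $m\in a_{00}(\bar x)$ (which equals $|a_{00}(\bar x)|$ under ND3). *)

theory Defs
  imports "HOL-Analysis.Analysis"
begin

text \<open>C^2 with explicitly named first and second Frechet derivatives.
  f' x is Df(x) (a bounded linear functional), f'' x is D^2 f(x)
  (a bounded bilinear form, curried).\<close>
definition C2_with ::
  "('a::euclidean_space \<Rightarrow> real) \<Rightarrow> ('a \<Rightarrow> ('a \<Rightarrow>\<^sub>L real))
     \<Rightarrow> ('a \<Rightarrow> ('a \<Rightarrow>\<^sub>L ('a \<Rightarrow>\<^sub>L real))) \<Rightarrow> bool" where
  "C2_with f f' f'' \<longleftrightarrow>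
     (\<forall>x. (f has_derivative blinfun_apply (f' x)) (at x)) \<and>
     (\<forall>x. (f' has_derivative blinfun_apply (f'' x)) (at x)) \<and>
     continuous_on UNIV f''"

definition D2 :: "('a::real_normed_vector \<Rightarrow>\<^sub>L ('a \<Rightarrow>\<^sub>L real)) \<Rightarrow> 'a \<Rightarrow> 'a \<Rightarrow> real" where
  "D2 A \<xi> \<eta> = blinfun_apply (blinfun_apply A \<xi>) \<eta>"

definition feasible_set ::
  "'i set \<Rightarrow> ('i \<Rightarrow> 'a \<Rightarrow> real) \<Rightarrow> 'j set \<Rightarrow> ('j \<Rightarrow> 'a \<Rightarrow> real) \<Rightarrow> nat
     \<Rightarrow> (nat \<Rightarrow> 'a \<Rightarrow> real) \<Rightarrow> (nat \<Rightarrow> 'a \<Rightarrow> real) \<Rightarrow> 'a set" where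
  "feasible_set I h J g k F1 F2 =
     {x. (\<forall>i\<in>I. h i x = 0) \<and> (\<forall>j\<in>J. g j x \<ge> 0) \<and>
         (\<forall>m\<in>{1..k}. F1 m x * F2 m x = 0 \<and> F2 m x \<ge> 0)}"

definition J0 :: "'j set \<Rightarrow> ('j \<Rightarrow> 'a \<Rightarrow> real) \<Rightarrow> 'a \<Rightarrow> 'j set" where
  "J0 J g x = {j\<in>J. g j x = 0}"

definition a00 :: "nat \<Rightarrow> (nat \<Rightarrow> 'a \<Rightarrow> real) \<Rightarrow> (nat \<Rightarrow> 'a \<Rightarrow> real) \<Rightarrow> 'a \<Rightarrow> nat set" where
  "a00 k F1 F2 x = {m\<in>{1..k}. F1 m x = 0 \<and> F2 m x = 0}"

definition a01 :: "nat \<Rightarrow> (nat \<Rightarrow> 'a \<Rightarrow> real) \<Rightarrow> (nat \<Rightarrow> 'a \<Rightarrow> real) \<Rightarrow> 'a \<Rightarrow> nat set" where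
  "a01 k F1 F2 x = {m\<in>{1..k}. F1 m x = 0 \<and> F2 m x > 0}"

definition a10 :: "nat \<Rightarrow> (nat \<Rightarrow> 'a \<Rightarrow> real) \<Rightarrow> (nat \<Rightarrow> 'a \<Rightarrow> real) \<Rightarrow> 'a \<Rightarrow> nat set" where
  "a10 k F1 F2 x = {m\<in>{1..k}. F1 m x \<noteq> 0 \<and> F2 m x = 0}"

definition local_minimizer :: "('a::metric_space \<Rightarrow> real) \<Rightarrow> 'a set \<Rightarrow> 'a \<Rightarrow> bool" where
  "local_minimizer f M x \<longleftrightarrow> x \<in> M \<and> (\<exists>\<epsilon>>0. \<forall>y\<in>M. dist y x < \<epsilon> \<longrightarrow> f x \<le> f y)"

text \<open>Restriction of a (symmetric) bilinear form B to a linear subspace T: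
  the self-adjoint operator A on T with inner (A xi) eta = B xi eta for xi, eta in T.\<close>
definition restr_eigenspace :: "('a::real_inner \<Rightarrow> 'a \<Rightarrow> real) \<Rightarrow> 'a set \<Rightarrow> real \<Rightarrow> 'a set" where
  "restr_eigenspace B T l = {\<xi>\<in>T. \<forall>\<eta>\<in>T. B \<xi> \<eta> = l * (\<xi> \<bullet> \<eta>)}"

definition restr_eigenvalue :: "('a::real_inner \<Rightarrow> 'a \<Rightarrow> real) \<Rightarrow> 'a set \<Rightarrow> real \<Rightarrow> bool" where
  "restr_eigenvalue B T l \<longleftrightarrow> (\<exists>\<xi>\<in>restr_eigenspace B T l. \<xi> \<noteq> 0)"

definition restr_nonsingular :: "('a::real_inner \<Rightarrow> 'a \<Rightarrow> real) \<Rightarrow> 'a set \<Rightarrow> bool" where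
  "restr_nonsingular B T \<longleftrightarrow> (\<forall>\<xi>\<in>T. (\<forall>\<eta>\<in>T. B \<xi> \<eta> = 0) \<longrightarrow> \<xi> = 0)"

definition neg_eig_count :: "('a::euclidean_space \<Rightarrow> 'a \<Rightarrow> real) \<Rightarrow> 'a set \<Rightarrow> nat" where
  "neg_eig_count B T =
     (\<Sum>l\<in>{l. l < 0 \<and> restr_eigenvalue B T l}. dim (restr_eigenspace B T l))"

end

theory Submission
  imports Defs
begin

text \<open>
  Near \<open>xb\<close> only the active constraints matter; collecting them into one family \<open>c r\<close> with
  multipliers \<open>m r\<close>, T-stationarity says that the Lagrangian \<open>L = f - \<Sum> m r c r\<close> is stationary at
  \<open>xb\<close> and \<open>D2L\<close> is its Hessian. By LICQ and the inverse function theorem, for every vector \<open>s\<close>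
  there is a curve \<open>X t\<close> with \<open>c r (X t) = t s r\<close> and tangent \<open>d\<close>, along which
  \<open>f (X t) - f xb = t \<Sum> m r s r + t\<^sup>2 D2L d d / 2 + o(t\<^sup>2)\<close>.
  If \<open>m\<close> is biactive, pushing \<open>F2 m\<close> into the positive half line stays feasible and decreases \<open>f\<close>
  to first order since \<open>rho2 m < 0\<close>; with \<open>s = 0\<close> and \<open>d\<close> an eigenvector of a negative eigenvalue
  the decrease is of second order. Conversely, if \<open>a00 = {}\<close> a sequence of feasible points with
  smaller values has a limiting direction that lies in \<open>T\<close> (here \<open>mu j > 0\<close> is used) and along
  which \<open>D2L\<close> is nonpositive, whereas \<open>D2L\<close> is positive definite on \<open>T\<close>: a minimiser of its
  Rayleigh quotient is an eigenvector, and eigenvalues are neither negative nor zero (ND4).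
\<close>

section \<open>Second derivatives of \<open>C\<^sup>2\<close> functions\<close>

lemma C2_withD:
  assumes "C2_with f f' f''"
  shows "(f has_derivative blinfun_apply (f' x)) (at x)"
    and "(f' has_derivative blinfun_apply (f'' x)) (at x)"
    and "continuous_on UNIV f''"
  using assms unfolding C2_with_def by auto

lemma C2_with_continuous_on: "C2_with f f' f'' \<Longrightarrow> continuous_on S f"
  by (meson C2_withD(1) continuous_at_imp_continuous_on has_derivative_continuous)

lemma C2_with_continuous_on_derivative: "C2_with f f' f'' \<Longrightarrow> continuous_on S f'"
  by (meson C2_withD(2) continuous_at_imp_continuous_on has_derivative_continuous)

lemma C2_with_eventually_nhds:
  assumes "C2_with f f' f''" and "open S" and "f x \<in> S"
  shows "\<forall>\<^sub>F y in nhds x. f y \<in> S"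
proof -
  have "open (f -` S)"
    by (rule open_vimage[OF assms(2) C2_with_continuous_on[OF assms(1)]])
  then show ?thesis
    using assms(3) eventually_nhds_in_open[of "f -` S" x] by simp
qed

lemma C2_with_diff:
  assumes "C2_with f f' f''" and "C2_with g g' g''"
  shows "C2_with (\<lambda>x. f x - g x) (\<lambda>x. f' x - g' x) (\<lambda>x. f'' x - g'' x)"
  using assms unfolding C2_with_def
  by (auto simp: minus_blinfun.rep_eq intro!: has_derivative_diff continuous_intros)

lemma C2_with_scale:
  assumes "C2_with f f' f''"
  shows "C2_with (\<lambda>x. a * f x) (\<lambda>x. a *\<^sub>R f' x) (\<lambda>x. a *\<^sub>R f'' x)"
  using assms unfolding C2_with_def
  by (auto simp: scaleR_blinfun.rep_eq intro!: has_derivative_mult_right has_derivative_scaleR_right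
      continuous_intros)

lemma C2_with_sum:
  assumes "finite E" and "\<forall>r\<in>E. C2_with (c r) (c' r) (c'' r)"
  shows "C2_with (\<lambda>x. \<Sum>r\<in>E. c r x) (\<lambda>x. \<Sum>r\<in>E. c' r x) (\<lambda>x. \<Sum>r\<in>E. c'' r x)"
proof -
  have sum_apply: "blinfun_apply (\<Sum>r\<in>E. A r) = (\<lambda>h. \<Sum>r\<in>E. A r h)"
    for A :: "_ \<Rightarrow> 'c::real_normed_vector \<Rightarrow>\<^sub>L 'd::real_normed_vector"
    by (rule ext) (simp add: blinfun.sum_left)
  show ?thesis
    using assms unfolding C2_with_def sum_apply
    by (auto intro!: has_derivative_sum continuous_intros)
qed

lemma D2_add_left: "D2 A (x + y) z = D2 A x z + D2 A y z"
  by (simp add: D2_def blinfun.add_left blinfun.add_right)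

lemma D2_add_right: "D2 A z (x + y) = D2 A z x + D2 A z y"
  by (simp add: D2_def blinfun.add_right)

lemma D2_scaleR_left: "D2 A (c *\<^sub>R x) z = c * D2 A x z"
  by (simp add: D2_def blinfun.scaleR_left blinfun.scaleR_right)

lemma D2_scaleR_right: "D2 A z (c *\<^sub>R x) = c * D2 A z x"
  by (simp add: D2_def blinfun.scaleR_right)

lemma D2_diff: "D2 (A - B) x y = D2 A x y - D2 B x y"
  by (simp add: D2_def blinfun.diff_left)

lemma abs_D2_le: "\<bar>D2 A u v\<bar> \<le> norm A * norm u * norm v"
proof -
  have "\<bar>D2 A u v\<bar> \<le> norm (blinfun_apply A u) * norm v"
    unfolding D2_def using norm_blinfun[of "blinfun_apply A u" v] by simp
  also have "\<dots> \<le> norm A * norm u * norm v"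
    by (intro mult_right_mono norm_blinfun) auto
  finally show ?thesis .
qed

lemma tendsto_D2 [tendsto_intros]:
  "(u \<longlongrightarrow> u0) F \<Longrightarrow> (v \<longlongrightarrow> v0) F \<Longrightarrow> ((\<lambda>t. D2 A (u t) (v t)) \<longlongrightarrow> D2 A u0 v0) F"
  unfolding D2_def by (intro tendsto_intros)

lemma C2_with_has_real_derivative_line:
  assumes "C2_with f f' f''"
  shows "((\<lambda>t. f (x + t *\<^sub>R w)) has_real_derivative f' (x + t *\<^sub>R w) w) (at t)"
proof -
  have "((\<lambda>t. x + t *\<^sub>R w) has_derivative (\<lambda>h. h *\<^sub>R w)) (at t)"
    by (auto intro!: derivative_eq_intros)
  from has_derivative_compose[OF this C2_withD(1)[OF assms]]
  show ?thesis unfolding has_field_derivative_def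
    by (rule has_derivative_eq_rhs) (auto simp: o_def blinfun.scaleR_right)
qed

lemma C2_with_has_real_derivative_line_derivative:
  assumes "C2_with f f' f''"
  shows "((\<lambda>t. f' (x + t *\<^sub>R w) v) has_real_derivative D2 (f'' (x + t *\<^sub>R w)) w v) (at t)"
proof -
  have "((\<lambda>t. x + t *\<^sub>R w) has_derivative (\<lambda>h. h *\<^sub>R w)) (at t)"
    by (auto intro!: derivative_eq_intros)
  from has_derivative_compose[OF this C2_withD(2)[OF assms]]
  have "((\<lambda>t. f' (x + t *\<^sub>R w)) has_derivative (\<lambda>h. f'' (x + t *\<^sub>R w) (h *\<^sub>R w))) (at t)"
    by (simp add: o_def)
  from bounded_linear.has_derivative[OF blinfun.bounded_linear_left this]
  show ?thesis unfolding has_field_derivative_def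
    by (rule has_derivative_eq_rhs) (auto simp: blinfun.scaleR_right blinfun.scaleR_left D2_def)
qed

lemma C2_with_taylor_mean_value:
  assumes "C2_with f f' f''"
  obtains s where "0 < s" "s < 1" "f (x + w) = f x + f' x w + D2 (f'' (x + s *\<^sub>R w)) w w / 2"
proof -
  define diff where "diff m = (if m = 0 then (\<lambda>t. f (x + t *\<^sub>R w))
     else if m = 1 then (\<lambda>t. f' (x + t *\<^sub>R w) w) else (\<lambda>t. D2 (f'' (x + t *\<^sub>R w)) w w))"
    for m :: nat
  have "\<exists>s::real. 0 < s \<and> s < 1 \<and>
      diff 0 1 = (\<Sum>m<2. diff m 0 / fact m * 1 ^ m) + diff 2 s / fact 2 * 1 ^ 2"
  proof (rule Maclaurin)
    show "\<forall>m t. m < 2 \<and> 0 \<le> t \<and> t \<le> 1 \<longrightarrow> (diff m has_real_derivative diff (Suc m) t) (at t)"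
      using C2_with_has_real_derivative_line[OF assms] C2_with_has_real_derivative_line_derivative[OF assms]
      by (auto simp: diff_def less_2_cases_iff)
  qed auto
  then show ?thesis
    using that by (auto simp: diff_def numeral_2_eq_2 lessThan_Suc)
qed

lemma C2_with_taylor_eventually:
  assumes "C2_with f f' f''" and "e > 0"
  shows "\<forall>\<^sub>F y in nhds x.
    \<bar>f y - f x - f' x (y - x) - D2 (f'' x) (y - x) (y - x) / 2\<bar> \<le> e * norm (y - x)^2"
proof -
  have "isCont f'' x"
    using C2_withD(3)[OF assms(1)] by (simp add: continuous_on_eq_continuous_at)
  then obtain d where "d > 0" and d: "\<And>z. dist z x < d \<Longrightarrow> dist (f'' z) (f'' x) < 2 * e"
    using assms(2) unfolding continuous_at_eps_delta by (metis mult_pos_pos zero_less_numeral)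
  have "\<bar>f y - f x - f' x (y - x) - D2 (f'' x) (y - x) (y - x) / 2\<bar> \<le> e * norm (y - x)^2"
    if y: "dist y x < d" for y
  proof -
    define w where "w = y - x"
    obtain s where s: "0 < s" "s < 1" "f (x + w) = f x + f' x w + D2 (f'' (x + s *\<^sub>R w)) w w / 2"
      using C2_with_taylor_mean_value[OF assms(1)] .
    have "dist (x + s *\<^sub>R w) x \<le> dist y x"
      using s by (simp add: dist_norm w_def mult_left_le_one_le)
    then have "norm (f'' (x + s *\<^sub>R w) - f'' x) \<le> 2 * e"
      using d y by (simp add: dist_norm less_imp_le)
    then have "\<bar>D2 (f'' (x + s *\<^sub>R w)) w w - D2 (f'' x) w w\<bar> \<le> 2 * e * norm w * norm w"
      using abs_D2_le[of "f'' (x + s *\<^sub>R w) - f'' x" w w]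
      by (simp add: D2_diff) (meson mult_right_mono norm_ge_zero order_trans)
    then show ?thesis
      using s(3) by (simp add: w_def power2_eq_square)
  qed
  then show ?thesis
    using \<open>d > 0\<close> unfolding eventually_nhds_metric by blast
qed

lemma second_difference_mean_value:
  assumes "C2_with f f' f''" and "t > 0"
  obtains z where "norm (z - x) \<le> t * (norm u + norm v)"
    and "f (x + t *\<^sub>R u + t *\<^sub>R v) - f (x + t *\<^sub>R u) - f (x + t *\<^sub>R v) + f x = t^2 * D2 (f'' z) v u"
proof -
  obtain s where s: "0 < s" "s < t"
    "f (x + t *\<^sub>R v + t *\<^sub>R u) - f (x + t *\<^sub>R u) - (f (x + t *\<^sub>R v) - f x)
      = t * (f' ((x + s *\<^sub>R u) + t *\<^sub>R v) u - f' (x + s *\<^sub>R u) u)"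
  proof -
    have "\<exists>s. 0 < s \<and> s < t \<and> (f ((x + t *\<^sub>R v) + t *\<^sub>R u) - f (x + t *\<^sub>R u))
        - (f ((x + t *\<^sub>R v) + 0 *\<^sub>R u) - f (x + 0 *\<^sub>R u))
        = (t - 0) * (f' ((x + t *\<^sub>R v) + s *\<^sub>R u) u - f' (x + s *\<^sub>R u) u)"
      by (rule MVT2[where f="\<lambda>s. f ((x + t *\<^sub>R v) + s *\<^sub>R u) - f (x + s *\<^sub>R u)"])
        (use assms in \<open>auto intro!: derivative_eq_intros C2_with_has_real_derivative_line\<close>)
    then show ?thesis
      using that by (auto simp: algebra_simps)
  qed
  have "\<exists>r. 0 < r \<and> r < t \<and> f' ((x + s *\<^sub>R u) + t *\<^sub>R v) u - f' ((x + s *\<^sub>R u) + 0 *\<^sub>R v) u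
      = (t - 0) * D2 (f'' ((x + s *\<^sub>R u) + r *\<^sub>R v)) v u"
    by (rule MVT2) (use assms in \<open>auto intro!: C2_with_has_real_derivative_line_derivative\<close>)
  then obtain r where r: "0 < r" "r < t" "f' ((x + s *\<^sub>R u) + t *\<^sub>R v) u - f' (x + s *\<^sub>R u) u
      = t * D2 (f'' ((x + s *\<^sub>R u) + r *\<^sub>R v)) v u"
    by auto
  have "norm (s *\<^sub>R u + r *\<^sub>R v) \<le> s * norm u + r * norm v"
    using s r by (metis abs_of_pos norm_scaleR norm_triangle_ineq)
  also have "\<dots> \<le> t * norm u + t * norm v"
    using s r by (intro add_mono mult_right_mono) auto
  finally have "norm ((x + s *\<^sub>R u) + r *\<^sub>R v - x) \<le> t * (norm u + norm v)"
    by (simp add: algebra_simps)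
  moreover have "f (x + t *\<^sub>R u + t *\<^sub>R v) - f (x + t *\<^sub>R u) - f (x + t *\<^sub>R v) + f x
      = t^2 * D2 (f'' ((x + s *\<^sub>R u) + r *\<^sub>R v)) v u"
    using s(3) r(3) by (simp add: algebra_simps power2_eq_square)
  ultimately show ?thesis
    using that by blast
qed

lemma second_difference_tendsto:
  assumes "C2_with f f' f''"
  shows "((\<lambda>t. (f (x + t *\<^sub>R u + t *\<^sub>R v) - f (x + t *\<^sub>R u) - f (x + t *\<^sub>R v) + f x) / t^2)
    \<longlongrightarrow> D2 (f'' x) v u) (at_right 0)"
proof -
  have "\<exists>z. norm (z - x) \<le> t * (norm u + norm v)
      \<and> f (x + t *\<^sub>R u + t *\<^sub>R v) - f (x + t *\<^sub>R u) - f (x + t *\<^sub>R v) + f x = t^2 * D2 (f'' z) v u"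
    if "t > 0" for t
    using second_difference_mean_value[OF assms that] by blast
  then obtain z where z: "\<And>t. t > 0 \<Longrightarrow> norm (z t - x) \<le> t * (norm u + norm v)
      \<and> f (x + t *\<^sub>R u + t *\<^sub>R v) - f (x + t *\<^sub>R u) - f (x + t *\<^sub>R v) + f x = t^2 * D2 (f'' (z t)) v u"
    by metis
  have pos: "\<forall>\<^sub>F t in at_right (0::real). t > 0"
    by (simp add: eventually_at_filter)
  have "((\<lambda>t. z t - x) \<longlongrightarrow> 0) (at_right 0)"
  proof (rule Lim_null_comparison)
    show "\<forall>\<^sub>F t in at_right 0. norm (z t - x) \<le> t * (norm u + norm v)"
      using pos by (rule eventually_mono) (use z in blast)
    show "((\<lambda>t. t * (norm u + norm v)) \<longlongrightarrow> 0) (at_right 0)"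
      by (rule tendsto_mult_left_zero) (rule tendsto_ident_at)
  qed
  then have "(z \<longlongrightarrow> x) (at_right 0)"
    by (simp add: LIM_zero_iff)
  moreover have "isCont f'' x"
    using C2_withD(3)[OF assms] by (simp add: continuous_on_eq_continuous_at)
  ultimately have "((\<lambda>t. D2 (f'' (z t)) v u) \<longlongrightarrow> D2 (f'' x) v u) (at_right 0)"
    unfolding D2_def by (intro tendsto_intros isCont_tendsto_compose[where g=f''])
  moreover have "\<forall>\<^sub>F t in at_right 0. D2 (f'' (z t)) v u
      = (f (x + t *\<^sub>R u + t *\<^sub>R v) - f (x + t *\<^sub>R u) - f (x + t *\<^sub>R v) + f x) / t^2"
    using pos by (rule eventually_mono) (simp add: z)
  ultimately show ?thesis
    by (rule Lim_transform_eventually)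
qed

lemma D2_symmetric:
  assumes "C2_with f f' f''"
  shows "D2 (f'' x) u v = D2 (f'' x) v u"
proof -
  have "(\<lambda>t. (f (x + t *\<^sub>R v + t *\<^sub>R u) - f (x + t *\<^sub>R v) - f (x + t *\<^sub>R u) + f x) / t^2)
      = (\<lambda>t. (f (x + t *\<^sub>R u + t *\<^sub>R v) - f (x + t *\<^sub>R u) - f (x + t *\<^sub>R v) + f x) / t^2)"
    by (rule ext) (simp add: algebra_simps)
  with second_difference_tendsto[OF assms, of x v u]
  have "((\<lambda>t. (f (x + t *\<^sub>R u + t *\<^sub>R v) - f (x + t *\<^sub>R u) - f (x + t *\<^sub>R v) + f x) / t^2)
      \<longlongrightarrow> D2 (f'' x) u v) (at_right 0)"
    by simp
  from tendsto_unique[OF trivial_limit_at_right_real this second_difference_tendsto[OF assms, of x u v]]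
  show ?thesis .
qed

section \<open>Eigenvalues of a symmetric form restricted to a subspace\<close>

lemma nonneg_quadratic_linear_coeff_eq_0:
  fixes c d :: real
  assumes "\<And>t. 0 \<le> 2 * t * c + t^2 * d"
  shows "c = 0"
proof (rule ccontr)
  assume "c \<noteq> 0"
  define M where "M = \<bar>d\<bar> + 1"
  have "M > 0" "d \<le> M"
    unfolding M_def by auto
  have "0 \<le> 2 * (- c / M) * c + (- c / M)^2 * d"
    by (rule assms)
  also have "\<dots> \<le> 2 * (- c / M) * c + (- c / M)^2 * M"
    using \<open>d \<le> M\<close> by (intro add_left_mono mult_left_mono) auto
  also have "\<dots> = - (c^2 / M)"
    using \<open>M > 0\<close> by (simp add: field_simps power2_eq_square)
  also have "\<dots> < 0"
    using \<open>c \<noteq> 0\<close> \<open>M > 0\<close> by simp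
  finally show False by simp
qed

lemma rayleigh_minimizer_restr_eigenvector:
  fixes A :: "'a::euclidean_space \<Rightarrow>\<^sub>L ('a \<Rightarrow>\<^sub>L real)"
  assumes sym: "\<And>u v. D2 A u v = D2 A v u" and "subspace T"
    and e: "e \<in> T" "norm e = 1"
    and min: "\<And>y. y \<in> T \<Longrightarrow> norm y = 1 \<Longrightarrow> D2 A e e \<le> D2 A y y"
  shows "e \<in> restr_eigenspace (D2 A) T (D2 A e e)"
proof -
  define l where "l = D2 A e e"
  have rayleigh: "l * (y \<bullet> y) \<le> D2 A y y" if "y \<in> T" for y
  proof (cases "y = 0")
    case False
    have "y /\<^sub>R norm y \<in> T"
      using that \<open>subspace T\<close> by (simp add: subspace_scale)
    from min[OF this] False have "l \<le> D2 A y y / (norm y)^2"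
      unfolding l_def by (simp add: D2_scaleR_left D2_scaleR_right power2_eq_square field_simps)
    then show ?thesis
      using False by (simp add: field_simps dot_square_norm)
  qed (simp add: D2_def)
  have "e \<bullet> e = 1"
    using e(2) by (simp add: dot_square_norm)
  have "D2 A e \<eta> = l * (e \<bullet> \<eta>)" if "\<eta> \<in> T" for \<eta>
  proof -
    have "0 \<le> 2 * t * (D2 A e \<eta> - l * (e \<bullet> \<eta>)) + t^2 * (D2 A \<eta> \<eta> - l * (\<eta> \<bullet> \<eta>))" for t
    proof -
      have "e + t *\<^sub>R \<eta> \<in> T"
        using e that \<open>subspace T\<close> by (simp add: subspace_add subspace_scale)
      moreover have "D2 A (e + t *\<^sub>R \<eta>) (e + t *\<^sub>R \<eta>) = l + 2 * t * D2 A e \<eta> + t^2 * D2 A \<eta> \<eta>"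
        using sym[of \<eta> e] unfolding l_def
        by (simp add: D2_add_left D2_add_right D2_scaleR_left D2_scaleR_right power2_eq_square algebra_simps)
      moreover have "(e + t *\<^sub>R \<eta>) \<bullet> (e + t *\<^sub>R \<eta>) = 1 + 2 * t * (e \<bullet> \<eta>) + t^2 * (\<eta> \<bullet> \<eta>)"
        using \<open>e \<bullet> e = 1\<close>
        by (simp add: inner_add_left inner_add_right inner_commute power2_eq_square algebra_simps)
      ultimately show ?thesis
        using rayleigh[of "e + t *\<^sub>R \<eta>"] by (simp add: algebra_simps)
    qed
    then have "D2 A e \<eta> - l * (e \<bullet> \<eta>) = 0"
      by (rule nonneg_quadratic_linear_coeff_eq_0)
    then show ?thesis
      by simp
  qed
  then show ?thesis
    using e unfolding restr_eigenspace_def l_def by blast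
qed

lemma nonpos_restr_eigenvalue_exists:
  fixes A :: "'a::euclidean_space \<Rightarrow>\<^sub>L ('a \<Rightarrow>\<^sub>L real)"
  assumes sym: "\<And>u v. D2 A u v = D2 A v u" and T: "subspace T"
    and \<xi>: "\<xi> \<in> T" "\<xi> \<noteq> 0" "D2 A \<xi> \<xi> \<le> 0"
  shows "\<exists>l\<le>0. restr_eigenvalue (D2 A) T l"
proof -
  let ?S = "T \<inter> sphere 0 1"
  have "compact ?S"
    by (intro closed_Int_compact closed_subspace T compact_sphere)
  moreover have \<xi>S: "\<xi> /\<^sub>R norm \<xi> \<in> ?S"
    using \<xi> T by (simp add: subspace_scale)
  moreover have "continuous_on ?S (\<lambda>y. D2 A y y)"
    unfolding D2_def by (intro continuous_intros)
  ultimately obtain e where e: "e \<in> ?S" "\<And>y. y \<in> ?S \<Longrightarrow> D2 A e e \<le> D2 A y y"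
    using continuous_attains_inf[of ?S] by blast
  have "D2 A (\<xi> /\<^sub>R norm \<xi>) (\<xi> /\<^sub>R norm \<xi>) \<le> 0"
    using \<xi> by (simp add: D2_scaleR_left D2_scaleR_right mult_nonneg_nonpos)
  then have "D2 A e e \<le> 0"
    using e(2)[OF \<xi>S] by linarith
  moreover have "e \<in> restr_eigenspace (D2 A) T (D2 A e e)"
    using e by (intro rayleigh_minimizer_restr_eigenvector[OF sym T]) auto
  moreover have "e \<noteq> 0"
    using e(1) by auto
  ultimately show ?thesis
    unfolding restr_eigenvalue_def by blast
qed

lemma finite_restr_eigenvalues:
  fixes B :: "'a::euclidean_space \<Rightarrow> 'a \<Rightarrow> real"
  assumes sym: "\<And>u v. B u v = B v u"
  shows "finite {l. restr_eigenvalue B T l}"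
proof -
  let ?L = "{l. restr_eigenvalue B T l}"
  have "\<forall>l\<in>?L. \<exists>x. x \<in> restr_eigenspace B T l \<and> x \<noteq> 0"
    unfolding restr_eigenvalue_def by blast
  from bchoice[OF this] obtain v where "\<forall>l\<in>?L. v l \<in> restr_eigenspace B T l \<and> v l \<noteq> 0" ..
  then have v: "\<And>l. l \<in> ?L \<Longrightarrow> v l \<in> restr_eigenspace B T l \<and> v l \<noteq> 0"
    by blast
  have orth: "v l \<bullet> v l' = 0" if "l \<in> ?L" "l' \<in> ?L" "l \<noteq> l'" for l l'
  proof -
    have "l * (v l \<bullet> v l') = B (v l) (v l')"
      using v[OF that(1)] v[OF that(2)] unfolding restr_eigenspace_def by auto
    also have "\<dots> = B (v l') (v l)"
      by (rule sym)
    also have "\<dots> = l' * (v l \<bullet> v l')"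
      using v[OF that(1)] v[OF that(2)] unfolding restr_eigenspace_def by (auto simp: inner_commute)
    finally show ?thesis
      using that(3) by simp
  qed
  then have "inj_on v ?L"
    using v by (intro inj_onI) (metis inner_eq_zero_iff)
  moreover have "independent (v ` ?L)"
    using v orth by (intro pairwise_orthogonal_independent) (auto simp: pairwise_def orthogonal_def)
  then have "finite (v ` ?L)"
    using independent_bound by blast
  ultimately show ?thesis
    using finite_imageD by blast
qed

lemma neg_eig_count_eq_0_iff:
  fixes B :: "'a::euclidean_space \<Rightarrow> 'a \<Rightarrow> real"
  assumes "\<And>u v. B u v = B v u"
  shows "neg_eig_count B T = 0 \<longleftrightarrow> (\<forall>l. restr_eigenvalue B T l \<longrightarrow> \<not> l < 0)"
proof -
  have "finite {l. l < 0 \<and> restr_eigenvalue B T l}"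
    by (rule finite_subset[OF _ finite_restr_eigenvalues[OF assms, where T=T]]) auto
  moreover have "dim (restr_eigenspace B T l) \<noteq> 0" if "restr_eigenvalue B T l" for l
    using that unfolding restr_eigenvalue_def by (auto simp: dim_eq_0)
  ultimately show ?thesis
    unfolding neg_eig_count_def by (auto simp: sum_eq_0_iff)
qed

section \<open>Curves with prescribed constraint values\<close>

lemma orthogonal_complement_projection_exists:
  fixes S :: "'a::euclidean_space set"
  obtains P where "linear P" and "\<And>\<zeta>. \<zeta> - P \<zeta> \<in> span S"
    and "\<And>z \<zeta>. z \<in> span S \<Longrightarrow> orthogonal z (P \<zeta>)"
    and "\<And>\<zeta>. (\<And>z. z \<in> S \<Longrightarrow> orthogonal z \<zeta>) \<Longrightarrow> P \<zeta> = \<zeta>"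
proof -
  obtain B where B: "B \<subseteq> span S" "pairwise orthogonal B" "span B = span S"
    using orthogonal_basis_subspace[of "span S"] by (metis subspace_span)
  define P where "P \<zeta> = \<zeta> - (\<Sum>b\<in>B. (b \<bullet> \<zeta> / (b \<bullet> b)) *\<^sub>R b)" for \<zeta>
  have "linear P"
    unfolding P_def
    by (intro linear_compose_sub linear_ident linear_compose_sum)
      (auto intro!: linearI simp: inner_add_right scaleR_add_left add_divide_distrib)
  moreover have span: "\<zeta> - P \<zeta> \<in> span S" for \<zeta>
  proof -
    have "(\<Sum>b\<in>B. (b \<bullet> \<zeta> / (b \<bullet> b)) *\<^sub>R b) \<in> span S"
      by (intro span_sum span_mul) (use B(1) in blast)
    then show ?thesis
      by (simp add: P_def)
  qed
  moreover have orth: "orthogonal z (P \<zeta>)" if "z \<in> span S" for z \<zeta>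
    unfolding P_def using Gram_Schmidt_step[OF B(2)] that B(3) by blast
  moreover have "P \<zeta> = \<zeta>" if "\<And>z. z \<in> S \<Longrightarrow> orthogonal z \<zeta>" for \<zeta>
  proof -
    have "orthogonal z (\<zeta> - P \<zeta>)" if "z \<in> span S" for z
    proof -
      have "orthogonal \<zeta> z"
        by (rule orthogonal_to_span[OF that])
          (simp add: orthogonal_commute \<open>\<And>z. z \<in> S \<Longrightarrow> orthogonal z \<zeta>\<close>)
      then show ?thesis
        using orth[OF that, of \<zeta>] by (simp add: orthogonal_def inner_diff_right inner_commute)
    qed
    from this[OF span[of \<zeta>]] show ?thesis
      by (simp add: orthogonal_def)
  qed
  ultimately show thesis
    using that by blast
qed

lemma inner_adjoint_one:
  fixes L :: "'a::euclidean_space \<Rightarrow>\<^sub>L real"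
  shows "adjoint (blinfun_apply L) 1 \<bullet> \<zeta> = L \<zeta>"
  using adjoint_works[of "blinfun_apply L" \<zeta> 1]
  by (simp add: inner_commute bounded_linear.linear[OF blinfun.bounded_linear_right])

lemma tendsto_difference_quotient_at_right:
  assumes "(X has_vector_derivative v) (at 0)"
  shows "((\<lambda>t. (X t - X 0) /\<^sub>R t) \<longlongrightarrow> v) (at_right 0)"
proof -
  have "(X has_derivative (\<lambda>t. t *\<^sub>R v)) (at 0 within {0<..})"
    using assms unfolding has_vector_derivative_def by (rule has_derivative_subset) auto
  then have "((\<lambda>t. (X t - X 0 - t *\<^sub>R v) /\<^sub>R norm t) \<longlongrightarrow> 0) (at_right 0)"
    unfolding has_derivative_at_within by simp
  then have "((\<lambda>t. (X t - X 0 - t *\<^sub>R v) /\<^sub>R norm t + v) \<longlongrightarrow> 0 + v) (at_right 0)"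
    by (intro tendsto_intros)
  moreover have "\<forall>\<^sub>F t in at_right 0. (X t - X 0 - t *\<^sub>R v) /\<^sub>R norm t + v = (X t - X 0) /\<^sub>R t"
    by (simp add: eventually_at_filter scaleR_diff_right)
  ultimately show ?thesis
    using Lim_transform_eventually by fastforce
qed

lemma inverse_function_curve:
  fixes \<Phi> :: "'a::euclidean_space \<Rightarrow> 'a" and \<Phi>' :: "'a \<Rightarrow> 'a \<Rightarrow>\<^sub>L 'a"
  assumes der: "\<And>x. (\<Phi> has_derivative \<Phi>' x) (at x)" and cont: "continuous_on UNIV \<Phi>'"
    and inj: "inj (\<Phi>' x0)"
  obtains X d where "\<forall>\<^sub>F t in at_right 0. \<Phi> (X t) = \<Phi> x0 + t *\<^sub>R w"
    and "((\<lambda>t. (X t - x0) /\<^sub>R t) \<longlongrightarrow> d) (at_right 0)" and "\<Phi>' x0 d = w"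
proof -
  have lin: "linear (\<Phi>' x0)"
    by (simp add: bounded_linear.linear blinfun.bounded_linear_right)
  obtain gi where gi: "linear gi" "gi \<circ> \<Phi>' x0 = id"
    using linear_injective_left_inverse[OF lin inj] by blast
  then have "Blinfun gi o\<^sub>L \<Phi>' x0 = id_blinfun"
    by (intro blinfun_eqI) (simp add: bounded_linear_Blinfun_apply linear_conv_bounded_linear fun_eq_iff)
  then obtain U V g g' where "x0 \<in> U" "open V" "\<Phi> x0 \<in> V" and hom: "homeomorphism U V \<Phi> g"
    and derg: "\<And>y. y \<in> V \<Longrightarrow> (g has_derivative (g' y)) (at y)"
    and g': "\<And>y. y \<in> V \<Longrightarrow> g' y = inv (\<Phi>' (g y))"
    using inverse_function_theorem[OF open_UNIV der cont UNIV_I] by metis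
  have "g (\<Phi> x0) = x0"
    using hom \<open>x0 \<in> U\<close> by (simp add: homeomorphism_apply1)
  define X where "X t = g (\<Phi> x0 + t *\<^sub>R w)" for t
  have "((\<lambda>t. \<Phi> x0 + t *\<^sub>R w) \<longlongrightarrow> \<Phi> x0) (at_right 0)"
    by (auto intro!: tendsto_eq_intros)
  then have "\<forall>\<^sub>F t in at_right 0. \<Phi> x0 + t *\<^sub>R w \<in> V"
    using \<open>open V\<close> \<open>\<Phi> x0 \<in> V\<close> by (rule topological_tendstoD)
  then have "\<forall>\<^sub>F t in at_right 0. \<Phi> (X t) = \<Phi> x0 + t *\<^sub>R w"
    by (rule eventually_mono) (use hom in \<open>simp add: X_def homeomorphism_apply2\<close>)
  moreover have "(X has_vector_derivative inv (\<Phi>' x0) w) (at 0)"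
  proof -
    have "((\<lambda>t. \<Phi> x0 + t *\<^sub>R w) has_derivative (\<lambda>t. t *\<^sub>R w)) (at 0)"
      by (auto intro!: derivative_eq_intros)
    moreover have "(g has_derivative g' (\<Phi> x0)) (at (\<Phi> x0 + 0 *\<^sub>R w))"
      using derg[OF \<open>\<Phi> x0 \<in> V\<close>] by simp
    ultimately have "((\<lambda>t. g (\<Phi> x0 + t *\<^sub>R w)) has_derivative (\<lambda>t. g' (\<Phi> x0) (t *\<^sub>R w))) (at 0)"
      by (rule has_derivative_compose)
    moreover have "linear (g' (\<Phi> x0))"
      using derg[OF \<open>\<Phi> x0 \<in> V\<close>] has_derivative_linear by blast
    ultimately show ?thesis
      unfolding has_vector_derivative_def X_def g'[OF \<open>\<Phi> x0 \<in> V\<close>] \<open>g (\<Phi> x0) = x0\<close>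
      by (simp add: linear_scale)
  qed
  from tendsto_difference_quotient_at_right[OF this]
  have "((\<lambda>t. (X t - x0) /\<^sub>R t) \<longlongrightarrow> inv (\<Phi>' x0) w) (at_right 0)"
    by (simp add: X_def \<open>g (\<Phi> x0) = x0\<close>)
  moreover have "\<Phi>' x0 (inv (\<Phi>' x0) w) = w"
    using linear_inj_imp_surj[OF lin inj] by (simp add: surj_f_inv_f)
  ultimately show thesis
    using that by blast
qed

text \<open>With \<open>P\<close> the orthogonal projection onto the complement of the gradients \<open>grad r\<close>, the chart
  \<open>x \<mapsto> (\<Sum>r\<in>E. c r x *\<^sub>R grad r) + P (x - xb)\<close> has an injective derivative at \<open>xb\<close>;
  by linear independence of the gradients, the values \<open>c r\<close> can be read off from the chart.\<close>

context
  fixes E :: "'r set" and grad :: "'r \<Rightarrow> 'a::euclidean_space" and P :: "'a \<Rightarrow> 'a"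
  assumes finite_E: "finite E" and P_linear: "linear P"
    and P_span: "\<And>\<zeta>. \<zeta> - P \<zeta> \<in> span (grad ` E)"
    and P_orthogonal: "\<And>z \<zeta>. z \<in> span (grad ` E) \<Longrightarrow> orthogonal z (P \<zeta>)"
    and P_id: "\<And>\<zeta>. (\<And>z. z \<in> grad ` E \<Longrightarrow> orthogonal z \<zeta>) \<Longrightarrow> P \<zeta> = \<zeta>"
begin

lemma gradient_chart_derivative_eq_0D:
  assumes "(\<Sum>r\<in>E. (grad r \<bullet> \<zeta>) *\<^sub>R grad r) + P \<zeta> = 0"
  shows "\<zeta> = 0"
proof -
  have "P \<zeta> \<bullet> \<zeta> = P \<zeta> \<bullet> P \<zeta>"
    using P_orthogonal[OF P_span, of \<zeta> \<zeta>]
    by (simp add: orthogonal_def inner_diff_left inner_diff_right inner_commute)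
  then have "(\<Sum>r\<in>E. (grad r \<bullet> \<zeta>)^2) + P \<zeta> \<bullet> P \<zeta> = 0"
    using arg_cong[OF assms, of "\<lambda>v. v \<bullet> \<zeta>"]
    by (simp add: inner_add_left inner_sum_left power2_eq_square)
  moreover have "(\<Sum>r\<in>E. (grad r \<bullet> \<zeta>)^2) \<ge> 0"
    by (simp add: sum_nonneg)
  ultimately have "(\<Sum>r\<in>E. (grad r \<bullet> \<zeta>)^2) = 0" and "P \<zeta> = 0"
    by (smt (verit) inner_ge_zero inner_eq_zero_iff)+
  then have "P \<zeta> = \<zeta>"
    using finite_E by (intro P_id) (auto simp: sum_nonneg_eq_0_iff orthogonal_def)
  with \<open>P \<zeta> = 0\<close> show ?thesis
    by simp
qed

lemma gradient_chart_coefficients_eq_0: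
  assumes indep: "\<forall>a. (\<forall>\<zeta>. (\<Sum>r\<in>E. a r * (grad r \<bullet> \<zeta>)) = 0) \<longrightarrow> (\<forall>r\<in>E. a r = 0)"
    and eq: "(\<Sum>r\<in>E. a r *\<^sub>R grad r) + P v = \<xi>" and \<xi>: "\<forall>r\<in>E. grad r \<bullet> \<xi> = 0"
  shows "\<forall>r\<in>E. a r = 0"
proof -
  let ?z = "\<Sum>r\<in>E. a r *\<^sub>R grad r"
  have "?z \<in> span (grad ` E)"
    by (intro span_sum span_mul span_base) auto
  moreover have "orthogonal (\<xi> - P v) ?z"
  proof (rule orthogonal_to_span[OF \<open>?z \<in> span (grad ` E)\<close>])
    fix y assume "y \<in> grad ` E"
    then have "orthogonal y \<xi>" and "orthogonal y (P v)"
      using \<xi> P_orthogonal by (auto simp: orthogonal_def span_base)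
    then show "orthogonal (\<xi> - P v) y"
      by (simp add: orthogonal_def inner_diff_left inner_diff_right inner_commute)
  qed
  ultimately have "?z = 0"
    using eq by (metis add_diff_cancel_right' orthogonal_self)
  have "(\<Sum>r\<in>E. a r * (grad r \<bullet> \<zeta>)) = ?z \<bullet> \<zeta>" for \<zeta>
    by (simp add: inner_sum_left)
  with \<open>?z = 0\<close> have "(\<Sum>r\<in>E. a r * (grad r \<bullet> \<zeta>)) = 0" for \<zeta>
    by simp
  then show ?thesis
    using indep by blast
qed

lemma gradient_chart_eq_tangentD:
  assumes "(\<Sum>r\<in>E. (grad r \<bullet> d) *\<^sub>R grad r) + P d = \<xi>" and "\<forall>r\<in>E. grad r \<bullet> \<xi> = 0"
  shows "d = \<xi>"
proof -
  have "P \<xi> = \<xi>"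
    by (rule P_id) (use assms(2) in \<open>auto simp: orthogonal_def\<close>)
  have "(\<Sum>r\<in>E. (grad r \<bullet> (d - \<xi>)) *\<^sub>R grad r) + P (d - \<xi>)
      = ((\<Sum>r\<in>E. (grad r \<bullet> d) *\<^sub>R grad r) + P d) - ((\<Sum>r\<in>E. (grad r \<bullet> \<xi>) *\<^sub>R grad r) + P \<xi>)"
    using linear_diff[OF P_linear] by (simp add: inner_diff_right scaleR_diff_left sum_subtractf)
  also have "\<dots> = 0"
    using assms \<open>P \<xi> = \<xi>\<close> by simp
  finally have "d - \<xi> = 0"
    by (rule gradient_chart_derivative_eq_0D)
  then show ?thesis
    by simp
qed

lemma gradient_chart_curve:
  fixes c :: "'r \<Rightarrow> 'a \<Rightarrow> real" and c' :: "'r \<Rightarrow> 'a \<Rightarrow> 'a \<Rightarrow>\<^sub>L real"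
  assumes der: "\<And>r x. r \<in> E \<Longrightarrow> (c r has_derivative c' r x) (at x)"
    and cont: "\<And>r. r \<in> E \<Longrightarrow> continuous_on UNIV (c' r)"
    and grad: "\<And>r \<zeta>. grad r \<bullet> \<zeta> = c' r xb \<zeta>"
  obtains X d where "\<forall>\<^sub>F t in at_right 0.
      (\<Sum>r\<in>E. c r (X t) *\<^sub>R grad r) + P (X t - xb) = (\<Sum>r\<in>E. c r xb *\<^sub>R grad r) + t *\<^sub>R w"
    and "((\<lambda>t. (X t - xb) /\<^sub>R t) \<longlongrightarrow> d) (at_right 0)"
    and "(\<Sum>r\<in>E. (grad r \<bullet> d) *\<^sub>R grad r) + P d = w"
proof -
  have "bounded_linear P"
    using P_linear by (simp add: linear_conv_bounded_linear)
  define \<Phi> where "\<Phi> x = (\<Sum>r\<in>E. c r x *\<^sub>R grad r) + P (x - xb)" for x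
  define \<Phi>' where "\<Phi>' x = (\<Sum>r\<in>E. blinfun_scaleR_left (grad r) o\<^sub>L c' r x) + Blinfun P" for x
  have \<Phi>'_apply: "\<Phi>' x \<zeta> = (\<Sum>r\<in>E. c' r x \<zeta> *\<^sub>R grad r) + P \<zeta>" for x \<zeta>
    unfolding \<Phi>'_def using \<open>bounded_linear P\<close>
    by (simp add: plus_blinfun.rep_eq blinfun.sum_left bounded_linear_Blinfun_apply)
  have "((\<lambda>x. P (x - xb)) has_derivative P) (at x)" for x
    using bounded_linear.has_derivative[OF \<open>bounded_linear P\<close>
        has_derivative_diff[OF has_derivative_ident has_derivative_const]]
    by simp
  then have "(\<Phi> has_derivative \<Phi>' x) (at x)" for x
    unfolding \<Phi>_def \<Phi>'_apply[abs_def]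
    by (intro has_derivative_add has_derivative_sum has_derivative_scaleR_left der)
  moreover have "continuous_on UNIV \<Phi>'"
    unfolding \<Phi>'_def by (intro continuous_intros cont) auto
  moreover have "inj (\<Phi>' xb)"
  proof (rule linear_injective_0[THEN iffD2])
    show "linear (blinfun_apply (\<Phi>' xb))"
      by (simp add: bounded_linear.linear blinfun.bounded_linear_right)
    show "\<forall>\<zeta>. \<Phi>' xb \<zeta> = 0 \<longrightarrow> \<zeta> = 0"
    proof (intro allI impI)
      fix \<zeta> assume "\<Phi>' xb \<zeta> = 0"
      then have "(\<Sum>r\<in>E. (grad r \<bullet> \<zeta>) *\<^sub>R grad r) + P \<zeta> = 0"
        by (simp add: \<Phi>'_apply grad)
      then show "\<zeta> = 0"
        by (rule gradient_chart_derivative_eq_0D)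
    qed
  qed
  ultimately obtain X d where X: "\<forall>\<^sub>F t in at_right 0. \<Phi> (X t) = \<Phi> xb + t *\<^sub>R w"
    and lim: "((\<lambda>t. (X t - xb) /\<^sub>R t) \<longlongrightarrow> d) (at_right 0)" and "\<Phi>' xb d = w"
    by (rule inverse_function_curve)
  show thesis
  proof (rule that[OF _ lim])
    have "\<Phi> xb = (\<Sum>r\<in>E. c r xb *\<^sub>R grad r)"
      using linear_0[OF P_linear] by (simp add: \<Phi>_def)
    with X show "\<forall>\<^sub>F t in at_right 0.
        (\<Sum>r\<in>E. c r (X t) *\<^sub>R grad r) + P (X t - xb) = (\<Sum>r\<in>E. c r xb *\<^sub>R grad r) + t *\<^sub>R w"
      by (simp add: \<Phi>_def)
    show "(\<Sum>r\<in>E. (grad r \<bullet> d) *\<^sub>R grad r) + P d = w"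
      using \<open>\<Phi>' xb d = w\<close> by (simp add: \<Phi>'_apply grad)
  qed
qed

end

lemma level_set_curve:
  fixes c :: "'r \<Rightarrow> 'a::euclidean_space \<Rightarrow> real" and c' :: "'r \<Rightarrow> 'a \<Rightarrow> 'a \<Rightarrow>\<^sub>L real"
  assumes "finite E"
    and der: "\<And>r x. r \<in> E \<Longrightarrow> (c r has_derivative c' r x) (at x)"
    and cont: "\<And>r. r \<in> E \<Longrightarrow> continuous_on UNIV (c' r)"
    and c0: "\<forall>r\<in>E. c r xb = 0"
    and licq: "\<forall>a. (\<forall>\<zeta>. (\<Sum>r\<in>E. a r * c' r xb \<zeta>) = 0) \<longrightarrow> (\<forall>r\<in>E. a r = 0)"
    and \<xi>: "\<forall>r\<in>E. c' r xb \<xi> = 0"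
  obtains X d where "\<forall>\<^sub>F t in at_right 0. \<forall>r\<in>E. c r (X t) = t * s r"
    and "((\<lambda>t. (X t - xb) /\<^sub>R t) \<longlongrightarrow> d) (at_right 0)"
    and "(\<forall>r\<in>E. s r = 0) \<Longrightarrow> d = \<xi>"
proof -
  define grad where "grad r = adjoint (blinfun_apply (c' r xb)) 1" for r
  have grad: "grad r \<bullet> \<zeta> = c' r xb \<zeta>" for r \<zeta>
    by (simp add: grad_def inner_adjoint_one)
  obtain P where P: "linear P" "\<And>\<zeta>. \<zeta> - P \<zeta> \<in> span (grad ` E)"
    "\<And>z \<zeta>. z \<in> span (grad ` E) \<Longrightarrow> orthogonal z (P \<zeta>)"
    "\<And>\<zeta>. (\<And>z. z \<in> grad ` E \<Longrightarrow> orthogonal z \<zeta>) \<Longrightarrow> P \<zeta> = \<zeta>"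
    using orthogonal_complement_projection_exists by blast
  note chart = \<open>finite E\<close> P
  obtain X d where X: "\<forall>\<^sub>F t in at_right 0. (\<Sum>r\<in>E. c r (X t) *\<^sub>R grad r) + P (X t - xb)
      = (\<Sum>r\<in>E. c r xb *\<^sub>R grad r) + t *\<^sub>R ((\<Sum>r\<in>E. s r *\<^sub>R grad r) + \<xi>)"
    and lim: "((\<lambda>t. (X t - xb) /\<^sub>R t) \<longlongrightarrow> d) (at_right 0)"
    and d: "(\<Sum>r\<in>E. (grad r \<bullet> d) *\<^sub>R grad r) + P d = (\<Sum>r\<in>E. s r *\<^sub>R grad r) + \<xi>"
    by (rule gradient_chart_curve[OF chart der cont grad])
  have indep: "\<forall>a. (\<forall>\<zeta>. (\<Sum>r\<in>E. a r * (grad r \<bullet> \<zeta>)) = 0) \<longrightarrow> (\<forall>r\<in>E. a r = 0)"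
    using licq by (simp add: grad)
  have coefficients: "\<forall>r\<in>E. c r (X t) = t * s r"
    if "(\<Sum>r\<in>E. c r (X t) *\<^sub>R grad r) + P (X t - xb)
      = (\<Sum>r\<in>E. c r xb *\<^sub>R grad r) + t *\<^sub>R ((\<Sum>r\<in>E. s r *\<^sub>R grad r) + \<xi>)" for t
  proof -
    have eq: "(\<Sum>r\<in>E. (c r (X t) - t * s r) *\<^sub>R grad r) + P (X t - xb) = t *\<^sub>R \<xi>"
      using that c0 by (simp add: scaleR_diff_left sum_subtractf scaleR_sum_right algebra_simps)
    have tangent: "\<forall>r\<in>E. grad r \<bullet> (t *\<^sub>R \<xi>) = 0"
      using \<xi> by (simp add: grad blinfun.scaleR_right)
    have "\<forall>r\<in>E. c r (X t) - t * s r = 0"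
      by (rule gradient_chart_coefficients_eq_0[OF chart indep eq tangent])
    then show ?thesis
      by simp
  qed
  have "\<forall>\<^sub>F t in at_right 0. \<forall>r\<in>E. c r (X t) = t * s r"
    using X by (rule eventually_mono) (rule coefficients)
  moreover have "d = \<xi>" if "\<forall>r\<in>E. s r = 0"
  proof (rule gradient_chart_eq_tangentD[OF chart])
    show "(\<Sum>r\<in>E. (grad r \<bullet> d) *\<^sub>R grad r) + P d = \<xi>"
      using d that by simp
    show "\<forall>r\<in>E. grad r \<bullet> \<xi> = 0"
      using \<xi> by (simp add: grad)
  qed
  ultimately show thesis
    using that lim by blast
qed

section \<open>Second-order conditions for finitely many constraints\<close>

text \<open>Multipliers act by \<open>*\<^sub>R\<close>, so the same definition yields the Lagrangian, its derivative and its
  Hessian.\<close>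

definition lagrangian ::
    "('a \<Rightarrow> 'b::real_vector) \<Rightarrow> 'r set \<Rightarrow> ('r \<Rightarrow> real) \<Rightarrow> ('r \<Rightarrow> 'a \<Rightarrow> 'b) \<Rightarrow> 'a \<Rightarrow> 'b"
  where "lagrangian f E m c x = f x - (\<Sum>r\<in>E. m r *\<^sub>R c r x)"

lemma C2_with_lagrangian:
  assumes "finite E" and "C2_with f f' f''" and "\<forall>r\<in>E. C2_with (c r) (c' r) (c'' r)"
  shows "C2_with (lagrangian f E m c) (lagrangian f' E m c') (lagrangian f'' E m c'')"
  unfolding lagrangian_def[abs_def] using assms
  by (simp only: real_scaleR_def) (intro C2_with_diff C2_with_sum; auto intro: C2_with_scale)

lemma tendsto_of_difference_quotient_at_right:
  fixes X :: "real \<Rightarrow> 'a::real_normed_vector"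
  assumes "((\<lambda>t. (X t - x0) /\<^sub>R t) \<longlongrightarrow> d) (at_right 0)"
  shows "(X \<longlongrightarrow> x0) (at_right 0)"
proof -
  have "((\<lambda>t. x0 + t *\<^sub>R ((X t - x0) /\<^sub>R t)) \<longlongrightarrow> x0 + 0 *\<^sub>R d) (at_right 0)"
    by (intro tendsto_intros assms)
  moreover have "\<forall>\<^sub>F t in at_right 0. x0 + t *\<^sub>R ((X t - x0) /\<^sub>R t) = X t"
    by (simp add: eventually_at_filter)
  ultimately show ?thesis
    by (simp add: tendsto_cong)
qed

lemma second_order_along_curve:
  assumes L: "C2_with L L' L''" and "L' x0 = 0"
    and lim: "((\<lambda>t. (X t - x0) /\<^sub>R t) \<longlongrightarrow> d) (at_right 0)"
  shows "((\<lambda>t. (L (X t) - L x0) / t^2) \<longlongrightarrow> D2 (L'' x0) d d / 2) (at_right 0)"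
proof (rule tendstoI)
  fix \<epsilon> :: real assume "\<epsilon> > 0"
  define q where "q t = (X t - x0) /\<^sub>R t" for t
  define K where "K = (norm d + 1)^2"
  have "K > 0"
    using norm_ge_zero[of d] unfolding K_def by (intro zero_less_power) linarith
  define e where "e = \<epsilon> / (2 * K)"
  have "e > 0"
    using \<open>\<epsilon> > 0\<close> \<open>K > 0\<close> unfolding e_def by simp
  have "\<forall>\<^sub>F t in at_right 0.
      \<bar>L (X t) - L x0 - D2 (L'' x0) (X t - x0) (X t - x0) / 2\<bar> \<le> e * norm (X t - x0)^2"
  proof -
    have "\<forall>\<^sub>F y in nhds x0. \<bar>L y - L x0 - D2 (L'' x0) (y - x0) (y - x0) / 2\<bar> \<le> e * norm (y - x0)^2"
      using C2_with_taylor_eventually[OF L \<open>e > 0\<close>, of x0] \<open>L' x0 = 0\<close> by simp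
    with tendsto_of_difference_quotient_at_right[OF lim] show ?thesis
      by (rule filterlim_iff[THEN iffD1, rule_format])
  qed
  moreover have "\<forall>\<^sub>F t in at_right 0. dist (D2 (L'' x0) (q t) (q t) / 2) (D2 (L'' x0) d d / 2) < \<epsilon> / 2"
    using \<open>\<epsilon> > 0\<close> lim unfolding q_def by (intro tendstoD tendsto_intros) auto
  moreover have "((\<lambda>t. norm (q t)) \<longlongrightarrow> norm d) (at_right 0)"
    using lim unfolding q_def by (intro tendsto_intros)
  then have "\<forall>\<^sub>F t in at_right 0. norm (q t) < norm d + 1"
    by (rule order_tendstoD) simp
  moreover have "\<forall>\<^sub>F t in at_right (0::real). t > 0"
    by (simp add: eventually_at_filter)
  ultimately show "\<forall>\<^sub>F t in at_right 0. dist ((L (X t) - L x0) / t^2) (D2 (L'' x0) d d / 2) < \<epsilon>"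
  proof eventually_elim
    case (elim t)
    then have X: "X t - x0 = t *\<^sub>R q t"
      by (simp add: q_def)
    have "\<bar>(L (X t) - L x0) / t^2 - D2 (L'' x0) (q t) (q t) / 2\<bar> \<le> e * norm (q t)^2"
      using elim(1) \<open>t > 0\<close>
      by (simp add: X D2_scaleR_left D2_scaleR_right power_mult_distrib divide_le_eq
          diff_divide_distrib[symmetric] field_simps power2_eq_square)
    also have "\<dots> \<le> e * K"
      unfolding K_def using elim(3) \<open>e > 0\<close> by (intro mult_left_mono power_mono) auto
    also have "\<dots> = \<epsilon> / 2"
      unfolding e_def using \<open>K > 0\<close> by simp
    finally show ?case
      using elim(2) unfolding dist_real_def by linarith
  qed
qed

lemma lagrangian_blinfun_apply:
  fixes f' :: "'a \<Rightarrow> 'b::real_normed_vector \<Rightarrow>\<^sub>L real"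
  shows "lagrangian f' E m c' x \<xi> = f' x \<xi> - (\<Sum>r\<in>E. m r * c' r x \<xi>)"
  by (simp add: lagrangian_def blinfun.diff_left blinfun.sum_left scaleR_blinfun.rep_eq)

lemma D2_lagrangian:
  fixes f'' :: "'a \<Rightarrow> 'b::real_normed_vector \<Rightarrow>\<^sub>L 'b \<Rightarrow>\<^sub>L real"
  shows "D2 (lagrangian f'' E m c'' x) u v = D2 (f'' x) u v - (\<Sum>r\<in>E. m r * D2 (c'' r x) u v)"
  by (simp add: lagrangian_def D2_def blinfun.diff_left blinfun.sum_left scaleR_blinfun.rep_eq)

lemma sequence_with_convergent_direction:
  fixes x0 :: "'a::euclidean_space"
  assumes "\<forall>\<epsilon>>0. \<exists>x. P x \<and> x \<noteq> x0 \<and> dist x x0 < \<epsilon>"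
  obtains y d where "\<And>n. P (y n)" "\<And>n. y n \<noteq> x0" "y \<longlonglongrightarrow> x0"
    "(\<lambda>n. (y n - x0) /\<^sub>R norm (y n - x0)) \<longlonglongrightarrow> d" "norm d = 1"
proof -
  have "\<forall>n. \<exists>x. P x \<and> x \<noteq> x0 \<and> dist x x0 < 1 / Suc n"
    using assms by simp
  from choice[OF this] obtain x where x: "\<And>n. P (x n) \<and> x n \<noteq> x0 \<and> dist (x n) x0 < 1 / Suc n"
    by blast
  have "x \<longlonglongrightarrow> x0"
  proof (rule tendsto_dist_iff[THEN iffD2], rule Lim_null_comparison)
    show "\<forall>\<^sub>F n in sequentially. norm (dist (x n) x0) \<le> 1 / real (Suc n)"
      using x by (simp add: less_imp_le)
    show "(\<lambda>n. 1 / real (Suc n)) \<longlonglongrightarrow> 0"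
      by (rule LIMSEQ_Suc[OF lim_const_over_n])
  qed
  moreover have "seq_compact (sphere (0::'a) 1)"
    by (rule compact_imp_seq_compact[OF compact_sphere])
  then have "\<exists>d\<in>sphere 0 1. \<exists>r. strict_mono r \<and> ((\<lambda>n. (x n - x0) /\<^sub>R norm (x n - x0)) \<circ> r) \<longlonglongrightarrow> d"
    unfolding seq_compact_def using x by simp
  then obtain d r where "d \<in> sphere 0 1" and "strict_mono r"
    and "((\<lambda>n. (x n - x0) /\<^sub>R norm (x n - x0)) \<circ> r) \<longlonglongrightarrow> d"
    by blast
  moreover note LIMSEQ_subseq_LIMSEQ[OF \<open>x \<longlonglongrightarrow> x0\<close> \<open>strict_mono r\<close>]
  ultimately show thesis
    using x by (intro that[of "x \<circ> r" d]) (simp_all add: o_def)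
qed

lemma tendsto_difference_quotient_direction:
  fixes \<phi> :: "'a::real_normed_vector \<Rightarrow> real"
  assumes der: "(\<phi> has_derivative \<phi>') (at x0)" and y: "y \<longlonglongrightarrow> x0" "\<And>n. y n \<noteq> x0"
    and d: "(\<lambda>n. (y n - x0) /\<^sub>R norm (y n - x0)) \<longlonglongrightarrow> d"
  shows "(\<lambda>n. (\<phi> (y n) - \<phi> x0) / norm (y n - x0)) \<longlonglongrightarrow> \<phi>' d"
proof -
  have lin: "bounded_linear \<phi>'"
    using der by (rule has_derivative_bounded_linear)
  have "((\<lambda>z. (\<phi> z - \<phi> x0 - \<phi>' (z - x0)) /\<^sub>R norm (z - x0)) \<longlongrightarrow> 0) (at x0)"
    using der unfolding has_derivative_at_within by simp
  moreover have "filterlim y (at x0) sequentially"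
    using y by (intro filterlim_atI) auto
  ultimately have "(\<lambda>n. (\<phi> (y n) - \<phi> x0 - \<phi>' (y n - x0)) /\<^sub>R norm (y n - x0)) \<longlonglongrightarrow> 0"
    by (rule filterlim_compose)
  moreover have "(\<lambda>n. \<phi>' ((y n - x0) /\<^sub>R norm (y n - x0))) \<longlonglongrightarrow> \<phi>' d"
    using bounded_linear.tendsto[OF lin d] .
  ultimately have "(\<lambda>n. (\<phi> (y n) - \<phi> x0 - \<phi>' (y n - x0)) /\<^sub>R norm (y n - x0)
      + \<phi>' ((y n - x0) /\<^sub>R norm (y n - x0))) \<longlonglongrightarrow> 0 + \<phi>' d"
    by (rule tendsto_add)
  moreover have "(\<lambda>n. (\<phi> (y n) - \<phi> x0 - \<phi>' (y n - x0)) /\<^sub>R norm (y n - x0)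
      + \<phi>' ((y n - x0) /\<^sub>R norm (y n - x0))) = (\<lambda>n. (\<phi> (y n) - \<phi> x0) / norm (y n - x0))"
    by (rule ext) (simp add: linear_scale[OF bounded_linear.linear[OF lin]] divide_inverse algebra_simps
        del: scaleR_diff_right)
  ultimately show ?thesis
    by simp
qed

lemma nonneg_derivative_along_direction:
  fixes \<phi> :: "'a::real_normed_vector \<Rightarrow> real"
  assumes "(\<phi> has_derivative \<phi>') (at x0)" and "y \<longlonglongrightarrow> x0" "\<And>n. y n \<noteq> x0"
    and "(\<lambda>n. (y n - x0) /\<^sub>R norm (y n - x0)) \<longlonglongrightarrow> d"
    and "\<And>n. \<phi> x0 \<le> \<phi> (y n)"
  shows "0 \<le> \<phi>' d"
  by (rule tendsto_lowerbound[OF tendsto_difference_quotient_direction[OF assms(1-4)]])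
    (use assms(5) in \<open>auto intro!: always_eventually divide_nonneg_nonneg\<close>)

context
  fixes f :: "'a::euclidean_space \<Rightarrow> real" and f' f'' and c :: "'r \<Rightarrow> 'a \<Rightarrow> real" and c' c''
    and E G :: "'r set" and m :: "'r \<Rightarrow> real" and xb :: 'a and y :: "nat \<Rightarrow> 'a" and d :: 'a
  assumes finite_E: "finite E" and G_subset: "G \<subseteq> E"
    and C2f: "C2_with f f' f''" and C2c: "\<forall>r\<in>E. C2_with (c r) (c' r) (c'' r)"
    and active: "\<forall>r\<in>E. c r xb = 0" and stationary: "lagrangian f' E m c' xb = 0"
    and m_pos: "\<forall>r\<in>G. m r > 0"
    and y: "y \<longlonglongrightarrow> xb" "\<And>n. y n \<noteq> xb"
    and d: "(\<lambda>n. (y n - xb) /\<^sub>R norm (y n - xb)) \<longlonglongrightarrow> d"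
    and equality: "\<And>n r. r \<in> E - G \<Longrightarrow> c r (y n) = 0"
    and inequality: "\<And>n r. r \<in> G \<Longrightarrow> c r (y n) \<ge> 0"
    and descent: "\<And>n. f (y n) < f xb"
begin

lemma limiting_direction_tangent: "\<forall>r\<in>E. c' r xb d = 0"
proof -
  have nonneg: "0 \<le> \<phi>' d" if "(\<phi> has_derivative \<phi>') (at xb)" "\<And>n. \<phi> xb \<le> \<phi> (y n)"
    for \<phi> :: "'a \<Rightarrow> real" and \<phi>'
    by (rule nonneg_derivative_along_direction[OF that(1) y(1) y(2) d]) (rule that(2))
  have der: "(c r has_derivative c' r xb) (at xb)" "((\<lambda>x. - c r x) has_derivative (\<lambda>h. - c' r xb h)) (at xb)"
    if "r \<in> E" for r
    using C2_withD(1) C2c that by (blast intro: has_derivative_minus)+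
  have E_minus_G: "c' r xb d = 0" if "r \<in> E - G" for r
    using nonneg[OF der(1)] nonneg[OF der(2)] that active equality by fastforce
  have G: "c' r xb d \<ge> 0" if "r \<in> G" for r
    using nonneg[OF der(1)] that G_subset active inequality by force
  have "0 \<le> - f' xb d"
    using descent by (intro nonneg[of "\<lambda>x. - f x"] has_derivative_minus C2_withD(1)[OF C2f])
      (simp add: less_imp_le)
  moreover have "f' xb d = (\<Sum>r\<in>E. m r * c' r xb d)"
    using arg_cong[OF stationary, of "\<lambda>L. L d"] by (simp add: lagrangian_blinfun_apply)
  also have "\<dots> = (\<Sum>r\<in>G. m r * c' r xb d)"
    using E_minus_G G_subset finite_E by (intro sum.mono_neutral_right) auto
  moreover have nonneg_terms: "\<And>r. r \<in> G \<Longrightarrow> 0 \<le> m r * c' r xb d"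
    using G m_pos by (simp add: less_imp_le)
  then have "0 \<le> (\<Sum>r\<in>G. m r * c' r xb d)"
    by (rule sum_nonneg)
  ultimately have "(\<Sum>r\<in>G. m r * c' r xb d) = 0"
    by linarith
  then have "\<forall>r\<in>G. m r * c' r xb d = 0"
    using nonneg_terms finite_subset[OF G_subset finite_E] by (subst (asm) sum_nonneg_eq_0_iff) auto
  then have "c' r xb d = 0" if "r \<in> G" for r
    using that m_pos by fastforce
  with E_minus_G show ?thesis
    by blast
qed

lemma limiting_direction_curvature: "D2 (lagrangian f'' E m c'' xb) d d \<le> 0"
proof (rule field_le_epsilon)
  fix e :: real assume "e > 0"
  define A where "A = lagrangian f'' E m c'' xb"
  define L where "L = lagrangian f E m c"
  have L: "C2_with L (lagrangian f' E m c') (lagrangian f'' E m c'')"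
    unfolding L_def using finite_E C2f C2c by (rule C2_with_lagrangian)
  have "\<forall>\<^sub>F z in nhds xb. \<bar>L z - L xb - D2 A (z - xb) (z - xb) / 2\<bar> \<le> e / 2 * norm (z - xb)^2"
    using C2_with_taylor_eventually[OF L, of "e / 2" xb] \<open>e > 0\<close> stationary unfolding A_def by simp
  with y(1) have "\<forall>\<^sub>F n in sequentially. \<bar>L (y n) - L xb - D2 A (y n - xb) (y n - xb) / 2\<bar>
      \<le> e / 2 * norm (y n - xb)^2"
    by (rule filterlim_iff[THEN iffD1, rule_format])
  then have "\<forall>\<^sub>F n in sequentially.
      D2 A ((y n - xb) /\<^sub>R norm (y n - xb)) ((y n - xb) /\<^sub>R norm (y n - xb)) \<le> e"
  proof (rule eventually_mono)
    fix n
    assume taylor: "\<bar>L (y n) - L xb - D2 A (y n - xb) (y n - xb) / 2\<bar> \<le> e / 2 * norm (y n - xb)^2"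
    have "(\<Sum>r\<in>E. m r * c r (y n)) = (\<Sum>r\<in>G. m r * c r (y n))"
      using equality G_subset finite_E by (intro sum.mono_neutral_right) auto
    also have "\<dots> \<ge> 0"
      using inequality m_pos by (intro sum_nonneg) (simp add: less_imp_le)
    finally have "L (y n) - L xb < 0"
      using descent[of n] active unfolding L_def lagrangian_def by simp
    with taylor have "D2 A (y n - xb) (y n - xb) \<le> e * norm (y n - xb)^2"
      by linarith
    then show "D2 A ((y n - xb) /\<^sub>R norm (y n - xb)) ((y n - xb) /\<^sub>R norm (y n - xb)) \<le> e"
      unfolding D2_scaleR_left D2_scaleR_right using y(2)[of n]
      by (simp add: power2_eq_square field_simps)
  qed
  moreover have "(\<lambda>n. D2 A ((y n - xb) /\<^sub>R norm (y n - xb)) ((y n - xb) /\<^sub>R norm (y n - xb)))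
      \<longlonglongrightarrow> D2 A d d"
    using d by (intro tendsto_intros)
  ultimately show "D2 (lagrangian f'' E m c'' xb) d d \<le> 0 + e"
    unfolding A_def by (simp add: tendsto_upperbound)
qed

end

lemma second_order_sufficient:
  fixes f :: "'a::euclidean_space \<Rightarrow> real" and c :: "'r \<Rightarrow> 'a \<Rightarrow> real"
  assumes "finite E" "G \<subseteq> E" "C2_with f f' f''" "\<forall>r\<in>E. C2_with (c r) (c' r) (c'' r)"
    and "\<forall>r\<in>E. c r xb = 0" "lagrangian f' E m c' xb = 0" "\<forall>r\<in>G. m r > 0"
    and positive: "\<And>\<xi>. \<forall>r\<in>E. c' r xb \<xi> = 0 \<Longrightarrow> \<xi> \<noteq> 0 \<Longrightarrow> D2 (lagrangian f'' E m c'' xb) \<xi> \<xi> > 0"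
    and feasible: "\<forall>\<^sub>F x in nhds xb. x \<in> M \<longrightarrow> (\<forall>r\<in>E - G. c r x = 0) \<and> (\<forall>r\<in>G. c r x \<ge> 0)"
  shows "\<forall>\<^sub>F x in nhds xb. x \<in> M \<longrightarrow> f xb \<le> f x"
proof (rule ccontr)
  assume not_min: "\<not> ?thesis"
  obtain \<delta> where "\<delta> > 0"
    and \<delta>: "\<And>x. dist x xb < \<delta> \<Longrightarrow> x \<in> M \<Longrightarrow> (\<forall>r\<in>E - G. c r x = 0) \<and> (\<forall>r\<in>G. c r x \<ge> 0)"
    using feasible unfolding eventually_nhds_metric by blast
  have close: "\<forall>\<epsilon>>0. \<exists>x. (dist x xb < \<delta> \<and> x \<in> M \<and> f x < f xb) \<and> x \<noteq> xb \<and> dist x xb < \<epsilon>"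
  proof (intro allI impI)
    fix \<epsilon> :: real assume "\<epsilon> > 0"
    from not_min \<open>\<epsilon> > 0\<close> \<open>\<delta> > 0\<close> obtain x where "dist x xb < min \<epsilon> \<delta>" "x \<in> M" "f x < f xb"
      unfolding eventually_nhds_metric by (metis min_less_iff_conj not_le)
    then show "\<exists>x. (dist x xb < \<delta> \<and> x \<in> M \<and> f x < f xb) \<and> x \<noteq> xb \<and> dist x xb < \<epsilon>"
      by auto
  qed
  obtain y d where y: "\<And>n. dist (y n) xb < \<delta> \<and> y n \<in> M \<and> f (y n) < f xb"
    "\<And>n. y n \<noteq> xb" "y \<longlonglongrightarrow> xb" and d: "(\<lambda>n. (y n - xb) /\<^sub>R norm (y n - xb)) \<longlonglongrightarrow> d" "norm d = 1"
    by (rule sequence_with_convergent_direction[OF close]) (rule that)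
  note directions = assms(1-7) y(3,2) d(1)
  have "\<forall>r\<in>E. c' r xb d = 0"
    by (rule limiting_direction_tangent[OF directions]) (use y(1) \<delta> in auto)
  moreover have "D2 (lagrangian f'' E m c'' xb) d d \<le> 0"
    by (rule limiting_direction_curvature[OF directions]) (use y(1) \<delta> in auto)
  ultimately show False
    using positive d(2) by fastforce
qed

context
  fixes f :: "'a::euclidean_space \<Rightarrow> real" and f' f'' and c :: "'r \<Rightarrow> 'a \<Rightarrow> real" and c' c''
    and E :: "'r set" and m s :: "'r \<Rightarrow> real" and xb :: 'a and X :: "real \<Rightarrow> 'a" and d :: 'a
  assumes finite_E: "finite E"
    and C2f: "C2_with f f' f''" and C2c: "\<forall>r\<in>E. C2_with (c r) (c' r) (c'' r)"
    and active: "\<forall>r\<in>E. c r xb = 0" and stationary: "lagrangian f' E m c' xb = 0"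
    and curve: "\<forall>\<^sub>F t in at_right 0. \<forall>r\<in>E. c r (X t) = t * s r"
    and direction: "((\<lambda>t. (X t - xb) /\<^sub>R t) \<longlongrightarrow> d) (at_right 0)"
    and minimal: "\<forall>\<^sub>F t in at_right 0. f xb \<le> f (X t)"
begin

lemma curve_lagrangian_expansion:
  shows "((\<lambda>t. (lagrangian f E m c (X t) - lagrangian f E m c xb) / t^2)
      \<longlongrightarrow> D2 (lagrangian f'' E m c'' xb) d d / 2) (at_right 0)"
    and "\<forall>\<^sub>F t in at_right 0. f (X t) - f xb
      = lagrangian f E m c (X t) - lagrangian f E m c xb + t * (\<Sum>r\<in>E. m r * s r)"
proof -
  show "((\<lambda>t. (lagrangian f E m c (X t) - lagrangian f E m c xb) / t^2)
      \<longlongrightarrow> D2 (lagrangian f'' E m c'' xb) d d / 2) (at_right 0)"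
    using C2_with_lagrangian[OF finite_E C2f C2c] stationary direction
    by (rule second_order_along_curve)
  show "\<forall>\<^sub>F t in at_right 0. f (X t) - f xb
      = lagrangian f E m c (X t) - lagrangian f E m c xb + t * (\<Sum>r\<in>E. m r * s r)"
    using curve by (rule eventually_mono)
      (simp add: lagrangian_def active sum_distrib_left mult.left_commute)
qed

lemma first_order_along_curve: "0 \<le> (\<Sum>r\<in>E. m r * s r)"
proof -
  let ?Q = "\<lambda>t. (lagrangian f E m c (X t) - lagrangian f E m c xb) / t^2"
  have "((\<lambda>t. t * ?Q t + (\<Sum>r\<in>E. m r * s r)) \<longlongrightarrow> 0 * (D2 (lagrangian f'' E m c'' xb) d d / 2)
      + (\<Sum>r\<in>E. m r * s r)) (at_right 0)"
    by (intro tendsto_intros curve_lagrangian_expansion(1) tendsto_ident_at)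
  moreover have "\<forall>\<^sub>F t in at_right 0. 0 \<le> t * ?Q t + (\<Sum>r\<in>E. m r * s r)"
    using curve_lagrangian_expansion(2) minimal eventually_at_right_less
  proof eventually_elim
    case (elim t)
    then have "t * ?Q t + (\<Sum>r\<in>E. m r * s r)
        = (lagrangian f E m c (X t) - lagrangian f E m c xb + t * (\<Sum>r\<in>E. m r * s r)) / t"
      by (simp add: power2_eq_square field_simps)
    also have "\<dots> = (f (X t) - f xb) / t"
      using elim(1) by simp
    finally have "t * ?Q t + (\<Sum>r\<in>E. m r * s r) = (f (X t) - f xb) / t" .
    with elim show ?case
      by simp
  qed
  ultimately show ?thesis
    by (simp add: tendsto_lowerbound)
qed

lemma second_order_along_curve_nonneg:
  assumes "\<forall>r\<in>E. s r = 0"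
  shows "0 \<le> D2 (lagrangian f'' E m c'' xb) d d"
proof -
  have "\<forall>\<^sub>F t in at_right 0. 0 \<le> (lagrangian f E m c (X t) - lagrangian f E m c xb) / t^2"
    using curve_lagrangian_expansion(2) minimal by eventually_elim (simp add: assms)
  from tendsto_lowerbound[OF curve_lagrangian_expansion(1) this trivial_limit_at_right_real]
  show ?thesis
    by simp
qed

end

lemma local_minimizer_eventually_le:
  assumes "local_minimizer f M x0" and "(X \<longlongrightarrow> x0) F" and "\<forall>\<^sub>F t in F. X t \<in> M"
  shows "\<forall>\<^sub>F t in F. f x0 \<le> f (X t)"
proof -
  obtain \<epsilon> where "\<epsilon> > 0" and \<epsilon>: "\<And>y. y \<in> M \<Longrightarrow> dist y x0 < \<epsilon> \<Longrightarrow> f x0 \<le> f y"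
    using assms(1) unfolding local_minimizer_def by blast
  have "\<forall>\<^sub>F t in F. dist (X t) x0 < \<epsilon>"
    using assms(2) \<open>\<epsilon> > 0\<close> by (rule tendstoD)
  with assms(3) show ?thesis
    by eventually_elim (rule \<epsilon>)
qed

lemma second_order_necessary:
  fixes f :: "'a::euclidean_space \<Rightarrow> real" and c :: "'r \<Rightarrow> 'a \<Rightarrow> real"
  assumes finite_E: "finite E" and C2f: "C2_with f f' f''" and C2c: "\<forall>r\<in>E. C2_with (c r) (c' r) (c'' r)"
    and active: "\<forall>r\<in>E. c r xb = 0"
    and licq: "\<forall>a. (\<forall>\<zeta>. (\<Sum>r\<in>E. a r * c' r xb \<zeta>) = 0) \<longrightarrow> (\<forall>r\<in>E. a r = 0)"
    and stationary: "lagrangian f' E m c' xb = 0" and min: "local_minimizer f M xb"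
    and feasible: "\<forall>\<^sub>F x in nhds xb. \<forall>t>0. (\<forall>r\<in>E. c r x = t * s r) \<longrightarrow> x \<in> M"
    and \<xi>: "\<forall>r\<in>E. c' r xb \<xi> = 0"
  shows "0 \<le> (\<Sum>r\<in>E. m r * s r)"
    and "\<forall>r\<in>E. s r = 0 \<Longrightarrow> 0 \<le> D2 (lagrangian f'' E m c'' xb) \<xi> \<xi>"
proof -
  have "(c r has_derivative c' r x) (at x)" "continuous_on UNIV (c' r)" if "r \<in> E" for r x
    using C2c that by (auto intro: C2_withD(1) C2_with_continuous_on_derivative)
  then obtain X d where curve: "\<forall>\<^sub>F t in at_right 0. \<forall>r\<in>E. c r (X t) = t * s r"
    and direction: "((\<lambda>t. (X t - xb) /\<^sub>R t) \<longlongrightarrow> d) (at_right 0)"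
    and d: "\<forall>r\<in>E. s r = 0 \<Longrightarrow> d = \<xi>"
    using level_set_curve[where c=c and c'=c' and s=s, OF finite_E _ _ active licq \<xi>] by blast
  have "(X \<longlongrightarrow> xb) (at_right 0)"
    using direction by (rule tendsto_of_difference_quotient_at_right)
  moreover have "\<forall>\<^sub>F t in at_right 0. \<forall>t'>0. (\<forall>r\<in>E. c r (X t) = t' * s r) \<longrightarrow> X t \<in> M"
    using feasible \<open>(X \<longlongrightarrow> xb) (at_right 0)\<close> by (rule filterlim_iff[THEN iffD1, rule_format, rotated])
  with curve eventually_at_right_less have "\<forall>\<^sub>F t in at_right 0. X t \<in> M"
    by eventually_elim blast
  ultimately have "\<forall>\<^sub>F t in at_right 0. f xb \<le> f (X t)"
    by (rule local_minimizer_eventually_le[OF min])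
  note along = finite_E C2f C2c active stationary curve direction this
  show "0 \<le> (\<Sum>r\<in>E. m r * s r)"
    by (rule first_order_along_curve[OF along])
  show "0 \<le> D2 (lagrangian f'' E m c'' xb) \<xi> \<xi>" if "\<forall>r\<in>E. s r = 0"
    using second_order_along_curve_nonneg[OF along that] d[OF that] by simp
qed

section \<open>Reduction of MPOC\<close>

text \<open>Index set of the active constraints at \<open>xb\<close>: all \<open>h i\<close>, the active \<open>g j\<close>, \<open>F1 m\<close> for
  \<open>m \<in> a01 \<union> a00\<close> and \<open>F2 m\<close> for \<open>m \<in> a10 \<union> a00\<close>.\<close>

definition mpoc_index :: "'i set \<Rightarrow> 'j set \<Rightarrow> nat set \<Rightarrow> nat set \<Rightarrow> ('i + 'j + nat + nat) set"
  where "mpoc_index I J K1 K2 = Inl ` I \<union> Inr ` (Inl ` J \<union> Inr ` (Inl ` K1 \<union> Inr ` K2))"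

lemma finite_mpoc_index:
  "finite I \<Longrightarrow> finite J \<Longrightarrow> finite K1 \<Longrightarrow> finite K2 \<Longrightarrow> finite (mpoc_index I J K1 K2)"
  by (simp add: mpoc_index_def)

lemma ball_mpoc_index:
  "(\<forall>r\<in>mpoc_index I J K1 K2. P r) \<longleftrightarrow> (\<forall>i\<in>I. P (Inl i)) \<and> (\<forall>j\<in>J. P (Inr (Inl j)))
    \<and> (\<forall>m\<in>K1. P (Inr (Inr (Inl m)))) \<and> (\<forall>m\<in>K2. P (Inr (Inr (Inr m))))"
  unfolding mpoc_index_def by blast

lemma sum_mpoc_index:
  assumes "finite I" "finite J" "finite K1" "finite K2"
  shows "(\<Sum>r\<in>mpoc_index I J K1 K2. \<phi> r) = (\<Sum>i\<in>I. \<phi> (Inl i)) + (\<Sum>j\<in>J. \<phi> (Inr (Inl j)))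
    + (\<Sum>m\<in>K1. \<phi> (Inr (Inr (Inl m)))) + (\<Sum>m\<in>K2. \<phi> (Inr (Inr (Inr m))))"
proof -
  have "Inl ` I \<inter> Inr ` (Inl ` J \<union> Inr ` (Inl ` K1 \<union> Inr ` K2)) = {}"
    "Inl ` J \<inter> Inr ` (Inl ` K1 \<union> Inr ` K2) = {}" "Inl ` K1 \<inter> Inr ` K2 = {}"
    by auto
  with assms show ?thesis
    unfolding mpoc_index_def by (simp add: sum.union_disjoint sum.reindex add.assoc)
qed

lemma sum_if_union:
  assumes "finite A" "finite B" "A \<inter> B = {}"
  shows "(\<Sum>m\<in>A \<union> B. (if m \<in> A then a m else b m) * \<phi> m) = (\<Sum>m\<in>A. a m * \<phi> m) + (\<Sum>m\<in>B. b m * \<phi> m)"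
  using assms by (simp add: sum.union_disjoint) (intro arg_cong2[where f="(+)"] sum.cong; auto)

locale mpoc_nondegenerate_point =
  fixes f :: "'a::euclidean_space \<Rightarrow> real"
    and f' :: "'a \<Rightarrow> ('a \<Rightarrow>\<^sub>L real)" and f'' :: "'a \<Rightarrow> ('a \<Rightarrow>\<^sub>L ('a \<Rightarrow>\<^sub>L real))"
    and I :: "'i set" and h :: "'i \<Rightarrow> 'a \<Rightarrow> real"
    and h' :: "'i \<Rightarrow> 'a \<Rightarrow> ('a \<Rightarrow>\<^sub>L real)" and h'' :: "'i \<Rightarrow> 'a \<Rightarrow> ('a \<Rightarrow>\<^sub>L ('a \<Rightarrow>\<^sub>L real))"
    and J :: "'j set" and g :: "'j \<Rightarrow> 'a \<Rightarrow> real"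
    and g' :: "'j \<Rightarrow> 'a \<Rightarrow> ('a \<Rightarrow>\<^sub>L real)" and g'' :: "'j \<Rightarrow> 'a \<Rightarrow> ('a \<Rightarrow>\<^sub>L ('a \<Rightarrow>\<^sub>L real))"
    and k :: nat and F1 F2 :: "nat \<Rightarrow> 'a \<Rightarrow> real"
    and F1' F2' :: "nat \<Rightarrow> 'a \<Rightarrow> ('a \<Rightarrow>\<^sub>L real)"
    and F1'' F2'' :: "nat \<Rightarrow> 'a \<Rightarrow> ('a \<Rightarrow>\<^sub>L ('a \<Rightarrow>\<^sub>L real))"
    and xb :: 'a
    and lam :: "'i \<Rightarrow> real" and mu :: "'j \<Rightarrow> real"
    and sig1 sig2 rho1 rho2 :: "nat \<Rightarrow> real"
    and D2L :: "'a \<Rightarrow> 'a \<Rightarrow> real" and T :: "'a set"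
  assumes finI: "finite I" and finJ: "finite J"
    and C2f: "C2_with f f' f''"
    and C2h: "\<forall>i\<in>I. C2_with (h i) (h' i) (h'' i)"
    and C2g: "\<forall>j\<in>J. C2_with (g j) (g' j) (g'' j)"
    and C2F1: "\<forall>m\<in>{1..k}. C2_with (F1 m) (F1' m) (F1'' m)"
    and C2F2: "\<forall>m\<in>{1..k}. C2_with (F2 m) (F2' m) (F2'' m)"
    and feas: "xb \<in> feasible_set I h J g k F1 F2"
    and stat: "\<forall>\<xi>. f' xb \<xi> =
        (\<Sum>i\<in>I. lam i * h' i xb \<xi>) + (\<Sum>j\<in>J0 J g xb. mu j * g' j xb \<xi>)
        + (\<Sum>m\<in>a01 k F1 F2 xb. sig1 m * F1' m xb \<xi>)
        + (\<Sum>m\<in>a10 k F1 F2 xb. sig2 m * F2' m xb \<xi>)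
        + (\<Sum>m\<in>a00 k F1 F2 xb. rho1 m * F1' m xb \<xi> + rho2 m * F2' m xb \<xi>)"
    and ND1: "\<forall>(a::'i \<Rightarrow> real) (b::'j \<Rightarrow> real) (c1::nat \<Rightarrow> real) (c2::nat \<Rightarrow> real).
        (\<forall>\<xi>. (\<Sum>i\<in>I. a i * h' i xb \<xi>) + (\<Sum>j\<in>J0 J g xb. b j * g' j xb \<xi>)
            + (\<Sum>m\<in>a01 k F1 F2 xb \<union> a00 k F1 F2 xb. c1 m * F1' m xb \<xi>)
            + (\<Sum>m\<in>a10 k F1 F2 xb \<union> a00 k F1 F2 xb. c2 m * F2' m xb \<xi>) = 0)
        \<longrightarrow> (\<forall>i\<in>I. a i = 0) \<and> (\<forall>j\<in>J0 J g xb. b j = 0)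
            \<and> (\<forall>m\<in>a01 k F1 F2 xb \<union> a00 k F1 F2 xb. c1 m = 0)
            \<and> (\<forall>m\<in>a10 k F1 F2 xb \<union> a00 k F1 F2 xb. c2 m = 0)"
    and ND2: "\<forall>j\<in>J0 J g xb. mu j > 0"
    and ND3: "\<forall>m\<in>a00 k F1 F2 xb. rho1 m \<noteq> 0 \<and> rho2 m < 0"
    and D2L_def: "\<forall>\<xi> \<eta>. D2L \<xi> \<eta> = D2 (f'' xb) \<xi> \<eta>
        - (\<Sum>i\<in>I. lam i * D2 (h'' i xb) \<xi> \<eta>)
        - (\<Sum>j\<in>J0 J g xb. mu j * D2 (g'' j xb) \<xi> \<eta>)
        - (\<Sum>m\<in>a01 k F1 F2 xb. sig1 m * D2 (F1'' m xb) \<xi> \<eta>)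
        - (\<Sum>m\<in>a10 k F1 F2 xb. sig2 m * D2 (F2'' m xb) \<xi> \<eta>)
        - (\<Sum>m\<in>a00 k F1 F2 xb. rho1 m * D2 (F1'' m xb) \<xi> \<eta> + rho2 m * D2 (F2'' m xb) \<xi> \<eta>)"
    and T_def: "T = {\<xi>. (\<forall>i\<in>I. h' i xb \<xi> = 0) \<and> (\<forall>j\<in>J0 J g xb. g' j xb \<xi> = 0)
        \<and> (\<forall>m\<in>a01 k F1 F2 xb \<union> a00 k F1 F2 xb. F1' m xb \<xi> = 0)
        \<and> (\<forall>m\<in>a10 k F1 F2 xb \<union> a00 k F1 F2 xb. F2' m xb \<xi> = 0)}"
    and ND4: "restr_nonsingular D2L T"
begin

abbreviation "M \<equiv> feasible_set I h J g k F1 F2"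
abbreviation "J0x \<equiv> J0 J g xb"
abbreviation "A00 \<equiv> a00 k F1 F2 xb"
abbreviation "A01 \<equiv> a01 k F1 F2 xb"
abbreviation "A10 \<equiv> a10 k F1 F2 xb"
abbreviation "E \<equiv> mpoc_index I J0x (A01 \<union> A00) (A10 \<union> A00)"
abbreviation "c \<equiv> case_sum h (case_sum g (case_sum F1 F2))"
abbreviation "c' \<equiv> case_sum h' (case_sum g' (case_sum F1' F2'))"
abbreviation "c'' \<equiv> case_sum h'' (case_sum g'' (case_sum F1'' F2''))"
abbreviation "multiplier \<equiv> case_sum lam (case_sum mu (case_sum (\<lambda>m. if m \<in> A01 then sig1 m else rho1 m)
  (\<lambda>m. if m \<in> A10 then sig2 m else rho2 m)))"

lemma finite_active_sets: "finite J0x" "finite A00" "finite A01" "finite A10"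
  using finJ by (auto simp: J0_def a00_def a01_def a10_def)

lemma active_sets_disjoint: "A01 \<inter> A00 = {}" "A10 \<inter> A00 = {}"
  by (auto simp: a00_def a01_def a10_def)

lemma pair_classification: "m \<in> {1..k} \<Longrightarrow> m \<in> A01 \<or> m \<in> A00 \<or> m \<in> A10"
  using feas by (force simp: feasible_set_def a00_def a01_def a10_def)

lemma finite_E: "finite E"
  using finI finite_active_sets by (simp add: finite_mpoc_index)

lemma sum_E: "(\<Sum>r\<in>E. \<phi> r) = (\<Sum>i\<in>I. \<phi> (Inl i)) + (\<Sum>j\<in>J0x. \<phi> (Inr (Inl j)))
    + (\<Sum>m\<in>A01 \<union> A00. \<phi> (Inr (Inr (Inl m)))) + (\<Sum>m\<in>A10 \<union> A00. \<phi> (Inr (Inr (Inr m))))"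
  using finI finite_active_sets by (simp add: sum_mpoc_index)

lemma C2_constraints: "\<forall>r\<in>E. C2_with (c r) (c' r) (c'' r)"
  using C2h C2g C2F1 C2F2 by (auto simp: ball_mpoc_index J0_def a00_def a01_def a10_def)

lemma active_constraints: "\<forall>r\<in>E. c r xb = 0"
  using feas by (auto simp: ball_mpoc_index feasible_set_def J0_def a00_def a01_def a10_def)

lemma licq: "\<forall>a. (\<forall>\<zeta>. (\<Sum>r\<in>E. a r * c' r xb \<zeta>) = 0) \<longrightarrow> (\<forall>r\<in>E. a r = 0)"
  using ND1[rule_format, of "\<lambda>i. a (Inl i)" "\<lambda>j. a (Inr (Inl j))" "\<lambda>m. a (Inr (Inr (Inl m)))"
      "\<lambda>m. a (Inr (Inr (Inr m)))" for a]
  by (simp add: sum_E ball_mpoc_index)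

lemma lagrangian_stationary: "lagrangian f' E multiplier c' xb = 0"
proof (rule blinfun_eqI)
  fix \<xi>
  show "lagrangian f' E multiplier c' xb \<xi> = blinfun_apply 0 \<xi>"
    using stat[rule_format, of \<xi>] finite_active_sets active_sets_disjoint
    by (simp add: lagrangian_blinfun_apply sum_E sum_if_union sum.distrib)
qed

lemma D2L_lagrangian: "D2L = D2 (lagrangian f'' E multiplier c'' xb)"
proof (intro ext)
  fix \<xi> \<eta>
  show "D2L \<xi> \<eta> = D2 (lagrangian f'' E multiplier c'' xb) \<xi> \<eta>"
    using D2L_def finite_active_sets active_sets_disjoint
    by (simp add: D2_lagrangian sum_E sum_if_union sum.distrib)
qed

lemma T_tangent: "T = {\<xi>. \<forall>r\<in>E. c' r xb \<xi> = 0}"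
  unfolding T_def by (simp add: ball_mpoc_index)

lemma strict_constraints_near:
  "\<forall>\<^sub>F x in nhds xb. (\<forall>j\<in>J - J0x. g j x > 0) \<and> (\<forall>m\<in>A01. F2 m x > 0) \<and> (\<forall>m\<in>A10. F1 m x \<noteq> 0)"
proof -
  have "\<forall>\<^sub>F x in nhds xb. \<forall>j\<in>J - J0x. g j x \<in> {0<..}"
    using finJ C2g feas
    by (intro eventually_ball_finite ballI C2_with_eventually_nhds)
      (auto simp: feasible_set_def J0_def less_le)
  moreover have "\<forall>\<^sub>F x in nhds xb. \<forall>m\<in>A01. F2 m x \<in> {0<..}"
    using finite_active_sets C2F2
    by (intro eventually_ball_finite ballI C2_with_eventually_nhds) (auto simp: a01_def)
  moreover have "\<forall>\<^sub>F x in nhds xb. \<forall>m\<in>A10. F1 m x \<in> - {0}"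
    using finite_active_sets C2F1
    by (intro eventually_ball_finite ballI C2_with_eventually_nhds) (auto simp: a10_def)
  ultimately show ?thesis
    by eventually_elim auto
qed

lemma curves_feasible:
  assumes "\<forall>i\<in>I. s (Inl i) = 0" "\<forall>j\<in>J0x. s (Inr (Inl j)) = 0"
    "\<forall>m\<in>A01 \<union> A00. s (Inr (Inr (Inl m))) = 0" "\<forall>m\<in>A10. s (Inr (Inr (Inr m))) = 0"
    "\<forall>m\<in>A00. s (Inr (Inr (Inr m))) \<ge> 0"
  shows "\<forall>\<^sub>F x in nhds xb. \<forall>t>0. (\<forall>r\<in>E. c r x = t * s r) \<longrightarrow> x \<in> M"
  using strict_constraints_near
proof eventually_elim
  case (elim x)
  show ?case
  proof (intro allI impI)
    fix t :: real assume "t > 0" and "\<forall>r\<in>E. c r x = t * s r"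
    then have x: "\<forall>i\<in>I. h i x = 0" "\<forall>j\<in>J0x. g j x = 0" "\<forall>m\<in>A01 \<union> A00. F1 m x = 0"
      "\<forall>m\<in>A10. F2 m x = 0" "\<forall>m\<in>A00. F2 m x \<ge> 0"
      using assms by (auto simp: ball_mpoc_index)
    have "g j x \<ge> 0" if "j \<in> J" for j
      using that x(2) elim by (cases "j \<in> J0x") (auto simp: less_imp_le)
    moreover have "F1 m x * F2 m x = 0 \<and> F2 m x \<ge> 0" if "m \<in> {1..k}" for m
      using pair_classification[OF that] x elim by (auto simp: less_imp_le)
    ultimately show "x \<in> M"
      using x(1) by (simp add: feasible_set_def)
  qed
qed

lemma constraints_near_without_biactive:
  assumes "A00 = {}"
  shows "\<forall>\<^sub>F x in nhds xb. x \<in> M \<longrightarrow>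
    (\<forall>r\<in>E - Inr ` Inl ` J0x. c r x = 0) \<and> (\<forall>r\<in>Inr ` Inl ` J0x. c r x \<ge> 0)"
  using strict_constraints_near
proof eventually_elim
  case (elim x)
  show ?case
  proof
    assume "x \<in> M"
    then have "\<forall>i\<in>I. h i x = 0" "\<forall>j\<in>J. g j x \<ge> 0" "\<forall>m\<in>{1..k}. F1 m x * F2 m x = 0"
      by (auto simp: feasible_set_def)
    moreover have "\<forall>m\<in>A01. F1 m x = 0" "\<forall>m\<in>A10. F2 m x = 0"
      using calculation(3) elim by (fastforce simp: a01_def a10_def)+
    moreover have "J0x \<subseteq> J"
      by (auto simp: J0_def)
    ultimately show "(\<forall>r\<in>E - Inr ` Inl ` J0x. c r x = 0) \<and> (\<forall>r\<in>Inr ` Inl ` J0x. c r x \<ge> 0)"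
      using elim assms by (auto simp: mpoc_index_def)
  qed
qed

lemma lagrangian_hessian_symmetric: "D2L u v = D2L v u"
  unfolding D2L_lagrangian
  by (rule D2_symmetric[OF C2_with_lagrangian[OF finite_E C2f C2_constraints]])

lemma subspace_T: "subspace T"
  unfolding T_tangent subspace_def by (auto simp: blinfun.add_right blinfun.scaleR_right)

lemma local_minimizer_imp_T_index_zero:
  assumes "local_minimizer f M xb"
  shows "A00 = {}" and "\<forall>l. restr_eigenvalue D2L T l \<longrightarrow> \<not> l < 0"
proof -
  note necessary = second_order_necessary[OF finite_E C2f C2_constraints active_constraints licq
      lagrangian_stationary assms]
  show "A00 = {}"
  proof (rule ccontr)
    assume "A00 \<noteq> {}"
    then obtain m0 where m0: "m0 \<in> A00"
      by blast
    define s :: "'i + 'j + nat + nat \<Rightarrow> real" where "s r = (if r = Inr (Inr (Inr m0)) then 1 else 0)" for r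
    have "m0 \<notin> A10"
      using m0 active_sets_disjoint by blast
    have "0 \<le> (\<Sum>r\<in>E. multiplier r * s r)"
      by (rule necessary(1)[OF curves_feasible, of _ 0]) (auto simp: s_def \<open>m0 \<notin> A10\<close>)
    also have "(\<Sum>r\<in>E. multiplier r * s r) = (\<Sum>r\<in>E. if r = Inr (Inr (Inr m0)) then multiplier r else 0)"
      by (rule sum.cong) (auto simp: s_def)
    also have "\<dots> = rho2 m0"
      using m0 \<open>m0 \<notin> A10\<close> finite_E by (simp add: sum.delta mpoc_index_def)
    finally show False
      using ND3 m0 by fastforce
  qed
  show "\<forall>l. restr_eigenvalue D2L T l \<longrightarrow> \<not> l < 0"
  proof (intro allI impI notI)
    fix l assume "restr_eigenvalue D2L T l" "l < 0"
    then obtain \<xi> where "\<xi> \<in> T" "\<xi> \<noteq> 0" "D2L \<xi> \<xi> = l * (\<xi> \<bullet> \<xi>)"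
      unfolding restr_eigenvalue_def restr_eigenspace_def by blast
    moreover have "0 \<le> D2L \<xi> \<xi>"
      unfolding D2L_lagrangian
      by (rule necessary(2)[OF curves_feasible, of "\<lambda>_. 0"]) (use \<open>\<xi> \<in> T\<close> T_tangent in auto)
    moreover have "l * (\<xi> \<bullet> \<xi>) < 0"
      using \<open>l < 0\<close> \<open>\<xi> \<noteq> 0\<close> by (simp add: mult_neg_pos)
    ultimately show False
      by linarith
  qed
qed

lemma T_index_zero_imp_local_minimizer:
  assumes "A00 = {}" and no_negative: "\<forall>l. restr_eigenvalue D2L T l \<longrightarrow> \<not> l < 0"
  shows "local_minimizer f M xb"
proof -
  have positive: "D2L \<xi> \<xi> > 0" if \<xi>: "\<xi> \<in> T" "\<xi> \<noteq> 0" for \<xi>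
  proof (rule ccontr)
    assume "\<not> D2L \<xi> \<xi> > 0"
    then have "D2 (lagrangian f'' E multiplier c'' xb) \<xi> \<xi> \<le> 0"
      unfolding D2L_lagrangian by simp
    from nonpos_restr_eigenvalue_exists[OF lagrangian_hessian_symmetric[unfolded D2L_lagrangian]
        subspace_T \<xi> this]
    obtain l where "l \<le> 0" "restr_eigenvalue D2L T l"
      unfolding D2L_lagrangian by blast
    with no_negative have "restr_eigenvalue D2L T 0"
      by force
    with ND4 show False
      unfolding restr_eigenvalue_def restr_eigenspace_def restr_nonsingular_def by auto
  qed
  have "\<forall>\<^sub>F x in nhds xb. x \<in> M \<longrightarrow> f xb \<le> f x"
  proof (rule second_order_sufficient[OF finite_E _ C2f C2_constraints active_constraints
        lagrangian_stationary _ _ constraints_near_without_biactive[OF assms(1)]])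
    show "Inr ` Inl ` J0x \<subseteq> E"
      by (auto simp: mpoc_index_def)
    show "\<forall>r\<in>Inr ` Inl ` J0x. multiplier r > 0"
      using ND2 by auto
    show "\<And>\<xi>. \<forall>r\<in>E. c' r xb \<xi> = 0 \<Longrightarrow> \<xi> \<noteq> 0 \<Longrightarrow> D2 (lagrangian f'' E multiplier c'' xb) \<xi> \<xi> > 0"
      using positive unfolding T_tangent D2L_lagrangian by blast
  qed
  then show ?thesis
    using feas unfolding local_minimizer_def eventually_nhds_metric by blast
qed

end

theorem mainTheorem6:
  fixes f :: "'a::euclidean_space \<Rightarrow> real"
    and f' :: "'a \<Rightarrow> ('a \<Rightarrow>\<^sub>L real)" and f'' :: "'a \<Rightarrow> ('a \<Rightarrow>\<^sub>L ('a \<Rightarrow>\<^sub>L real))"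
    and I :: "'i set" and h :: "'i \<Rightarrow> 'a \<Rightarrow> real"
    and h' :: "'i \<Rightarrow> 'a \<Rightarrow> ('a \<Rightarrow>\<^sub>L real)" and h'' :: "'i \<Rightarrow> 'a \<Rightarrow> ('a \<Rightarrow>\<^sub>L ('a \<Rightarrow>\<^sub>L real))"
    and J :: "'j set" and g :: "'j \<Rightarrow> 'a \<Rightarrow> real"
    and g' :: "'j \<Rightarrow> 'a \<Rightarrow> ('a \<Rightarrow>\<^sub>L real)" and g'' :: "'j \<Rightarrow> 'a \<Rightarrow> ('a \<Rightarrow>\<^sub>L ('a \<Rightarrow>\<^sub>L real))"
    and k :: nat and F1 F2 :: "nat \<Rightarrow> 'a \<Rightarrow> real"
    and F1' F2' :: "nat \<Rightarrow> 'a \<Rightarrow> ('a \<Rightarrow>\<^sub>L real)"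
    and F1'' F2'' :: "nat \<Rightarrow> 'a \<Rightarrow> ('a \<Rightarrow>\<^sub>L ('a \<Rightarrow>\<^sub>L real))"
    and xb :: 'a
    and lam :: "'i \<Rightarrow> real" and mu :: "'j \<Rightarrow> real"
    and sig1 sig2 rho1 rho2 :: "nat \<Rightarrow> real"
    and D2L :: "'a \<Rightarrow> 'a \<Rightarrow> real" and T :: "'a set"
  assumes finI: "finite I" and finJ: "finite J"
    and C2f: "C2_with f f' f''"
    and C2h: "\<forall>i\<in>I. C2_with (h i) (h' i) (h'' i)"
    and C2g: "\<forall>j\<in>J. C2_with (g j) (g' j) (g'' j)"
    and C2F1: "\<forall>m\<in>{1..k}. C2_with (F1 m) (F1' m) (F1'' m)"
    and C2F2: "\<forall>m\<in>{1..k}. C2_with (F2 m) (F2' m) (F2'' m)"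
    and feas: "xb \<in> feasible_set I h J g k F1 F2"
    \<comment> \<open>T-stationarity with the multipliers\<close>
    and stat: "\<forall>\<xi>. f' xb \<xi> =
        (\<Sum>i\<in>I. lam i * h' i xb \<xi>) + (\<Sum>j\<in>J0 J g xb. mu j * g' j xb \<xi>)
        + (\<Sum>m\<in>a01 k F1 F2 xb. sig1 m * F1' m xb \<xi>)
        + (\<Sum>m\<in>a10 k F1 F2 xb. sig2 m * F2' m xb \<xi>)
        + (\<Sum>m\<in>a00 k F1 F2 xb. rho1 m * F1' m xb \<xi> + rho2 m * F2' m xb \<xi>)"
    and mu_nonneg: "\<forall>j\<in>J0 J g xb. mu j \<ge> 0"
    and rho_sign: "\<forall>m\<in>a00 k F1 F2 xb. rho1 m = 0 \<or> rho2 m \<le> 0"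
    \<comment> \<open>ND1: LICQ (linear independence of the family of differentials)\<close>
    and ND1: "\<forall>(a::'i \<Rightarrow> real) (b::'j \<Rightarrow> real) (c1::nat \<Rightarrow> real) (c2::nat \<Rightarrow> real).
        (\<forall>\<xi>. (\<Sum>i\<in>I. a i * h' i xb \<xi>) + (\<Sum>j\<in>J0 J g xb. b j * g' j xb \<xi>)
            + (\<Sum>m\<in>a01 k F1 F2 xb \<union> a00 k F1 F2 xb. c1 m * F1' m xb \<xi>)
            + (\<Sum>m\<in>a10 k F1 F2 xb \<union> a00 k F1 F2 xb. c2 m * F2' m xb \<xi>) = 0)
        \<longrightarrow> (\<forall>i\<in>I. a i = 0) \<and> (\<forall>j\<in>J0 J g xb. b j = 0)
            \<and> (\<forall>m\<in>a01 k F1 F2 xb \<union> a00 k F1 F2 xb. c1 m = 0)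
            \<and> (\<forall>m\<in>a10 k F1 F2 xb \<union> a00 k F1 F2 xb. c2 m = 0)"
    and ND2: "\<forall>j\<in>J0 J g xb. mu j > 0"
    and ND3: "\<forall>m\<in>a00 k F1 F2 xb. rho1 m \<noteq> 0 \<and> rho2 m < 0"
    \<comment> \<open>D2L is the Hessian of the Lagrange function at xb\<close>
    and D2L_def: "\<forall>\<xi> \<eta>. D2L \<xi> \<eta> = D2 (f'' xb) \<xi> \<eta>
        - (\<Sum>i\<in>I. lam i * D2 (h'' i xb) \<xi> \<eta>)
        - (\<Sum>j\<in>J0 J g xb. mu j * D2 (g'' j xb) \<xi> \<eta>)
        - (\<Sum>m\<in>a01 k F1 F2 xb. sig1 m * D2 (F1'' m xb) \<xi> \<eta>)
        - (\<Sum>m\<in>a10 k F1 F2 xb. sig2 m * D2 (F2'' m xb) \<xi> \<eta>)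
        - (\<Sum>m\<in>a00 k F1 F2 xb. rho1 m * D2 (F1'' m xb) \<xi> \<eta> + rho2 m * D2 (F2'' m xb) \<xi> \<eta>)"
    \<comment> \<open>T is the tangent space T_xb M(xb)\<close>
    and T_def: "T = {\<xi>. (\<forall>i\<in>I. h' i xb \<xi> = 0) \<and> (\<forall>j\<in>J0 J g xb. g' j xb \<xi> = 0)
        \<and> (\<forall>m\<in>a01 k F1 F2 xb \<union> a00 k F1 F2 xb. F1' m xb \<xi> = 0)
        \<and> (\<forall>m\<in>a10 k F1 F2 xb \<union> a00 k F1 F2 xb. F2' m xb \<xi> = 0)}"
    and ND4: "restr_nonsingular D2L T"
  shows "(local_minimizer f (feasible_set I h J g k F1 F2) xb \<longleftrightarrow>
            neg_eig_count D2L T + card {m\<in>a00 k F1 F2 xb. rho2 m < 0} = 0)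
       \<and> (local_minimizer f (feasible_set I h J g k F1 F2) xb \<longleftrightarrow>
            a00 k F1 F2 xb = {} \<and> (\<forall>l. restr_eigenvalue D2L T l \<longrightarrow> \<not> l < 0))"
proof -
  interpret mpoc: mpoc_nondegenerate_point f f' f'' I h h' h'' J g g' g'' k F1 F2 F1' F2' F1'' F2''
      xb lam mu sig1 sig2 rho1 rho2 D2L T
    using finI finJ C2f C2h C2g C2F1 C2F2 feas stat ND1 ND2 ND3 D2L_def T_def ND4
    by unfold_locales
  have "local_minimizer f (feasible_set I h J g k F1 F2) xb \<longleftrightarrow>
      a00 k F1 F2 xb = {} \<and> (\<forall>l. restr_eigenvalue D2L T l \<longrightarrow> \<not> l < 0)"
    using mpoc.local_minimizer_imp_T_index_zero mpoc.T_index_zero_imp_local_minimizer by blast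
  moreover have "card {m\<in>a00 k F1 F2 xb. rho2 m < 0} = 0 \<longleftrightarrow> a00 k F1 F2 xb = {}"
    using ND3 mpoc.finite_active_sets by auto
  moreover have "neg_eig_count D2L T = 0 \<longleftrightarrow> (\<forall>l. restr_eigenvalue D2L T l \<longrightarrow> \<not> l < 0)"
    using neg_eig_count_eq_0_iff[OF mpoc.lagrangian_hessian_symmetric] .
  ultimately show ?thesis
    by auto
qed

end
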